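(* The class of $\mathbb{R}$-forests (with isometric embeddings) has the joint embedding property and the amalgamation property.
   Context: An $\mathbb{R}$-forest is a complete extended ($[0,\infty]$-valued) metric space $(X,d)$ such that for every $x\in X$, $\{y:d(x,y)<\infty\}$ is an $\mathbb{R}$-tree (a uniquely arc-connected complete metric space whose arcs $[x,y]$ are isometric to $[0,d(x,y)]$). *)

theory Defs
  imports Complex_Main "HOL-Library.Extended_Nonnegative_Real"
begin

definition ext_metric :: "'a set \<Rightarrow> ('a \<Rightarrow> 'a \<Rightarrow> ennreal) \<Rightarrow> bool" where
  "ext_metric X d \<longleftrightarrow>
     (\<forall>x\<in>X. \<forall>y\<in>X. d x y = 0 \<longleftrightarrow> x = y) \<and>
     (\<forall>x\<in>X. \<forall>y\<in>X. d x y = d y x) \<and>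
     (\<forall>x\<in>X. \<forall>y\<in>X. \<forall>z\<in>X. d x z \<le> d x y + d y z)"

definition ext_cauchy :: "('a \<Rightarrow> 'a \<Rightarrow> ennreal) \<Rightarrow> (nat \<Rightarrow> 'a) \<Rightarrow> bool" where
  "ext_cauchy d s \<longleftrightarrow>
     (\<forall>e::real. e > 0 \<longrightarrow> (\<exists>N. \<forall>m\<ge>N. \<forall>n\<ge>N. d (s m) (s n) < ennreal e))"

definition ext_converges_in :: "'a set \<Rightarrow> ('a \<Rightarrow> 'a \<Rightarrow> ennreal) \<Rightarrow> (nat \<Rightarrow> 'a) \<Rightarrow> bool" where
  "ext_converges_in X d s \<longleftrightarrow>
     (\<exists>x\<in>X. \<forall>e::real. e > 0 \<longrightarrow> (\<exists>N. \<forall>n\<ge>N. d (s n) x < ennreal e))"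

definition ext_complete :: "'a set \<Rightarrow> ('a \<Rightarrow> 'a \<Rightarrow> ennreal) \<Rightarrow> bool" where
  "ext_complete X d \<longleftrightarrow>
     (\<forall>s. (\<forall>n. s n \<in> X) \<and> ext_cauchy d s \<longrightarrow> ext_converges_in X d s)"

text \<open>Since [0,1] is compact,
  such a map is automatically a homeomorphism onto its image.\<close>

definition is_arc :: "'a set \<Rightarrow> ('a \<Rightarrow> 'a \<Rightarrow> ennreal) \<Rightarrow> 'a \<Rightarrow> 'a \<Rightarrow> 'a set \<Rightarrow> bool" where
  "is_arc T d y z A \<longleftrightarrow>
     (\<exists>\<gamma>::real \<Rightarrow> 'a.
        \<gamma> ` {0..1} = A \<and> A \<subseteq> T \<and> inj_on \<gamma> {0..1} \<and> \<gamma> 0 = y \<and> \<gamma> 1 = z \<and>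
        (\<forall>t\<in>{0..1}. \<forall>e::real. e > 0 \<longrightarrow>
           (\<exists>\<delta>>0. \<forall>s\<in>{0..1}. \<bar>s - t\<bar> < \<delta> \<longrightarrow> d (\<gamma> s) (\<gamma> t) < ennreal e)))"

definition isometric_to_interval :: "('a \<Rightarrow> 'a \<Rightarrow> ennreal) \<Rightarrow> 'a set \<Rightarrow> real \<Rightarrow> bool" where
  "isometric_to_interval d A L \<longleftrightarrow>
     (\<exists>\<phi>::real \<Rightarrow> 'a. bij_betw \<phi> {0..L} A \<and>
        (\<forall>s\<in>{0..L}. \<forall>t\<in>{0..L}. d (\<phi> s) (\<phi> t) = ennreal \<bar>s - t\<bar>))"

definition R_tree :: "'a set \<Rightarrow> ('a \<Rightarrow> 'a \<Rightarrow> ennreal) \<Rightarrow> bool" where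
  "R_tree T d \<longleftrightarrow>
     ext_metric T d \<and> (\<forall>y\<in>T. \<forall>z\<in>T. d y z < \<infinity>) \<and> ext_complete T d \<and>
     (\<forall>y\<in>T. \<forall>z\<in>T. y \<noteq> z \<longrightarrow>
        (\<exists>!A. is_arc T d y z A) \<and>
        (\<forall>A. is_arc T d y z A \<longrightarrow> isometric_to_interval d A (enn2real (d y z))))"

definition R_forest :: "'a set \<Rightarrow> ('a \<Rightarrow> 'a \<Rightarrow> ennreal) \<Rightarrow> bool" where
  "R_forest X d \<longleftrightarrow>
     ext_metric X d \<and> ext_complete X d \<and>
     (\<forall>x\<in>X. R_tree {y\<in>X. d x y < \<infinity>} d)"

definition iso_emb ::
  "'a set \<Rightarrow> ('a \<Rightarrow> 'a \<Rightarrow> ennreal) \<Rightarrow> 'b set \<Rightarrow> ('b \<Rightarrow> 'b \<Rightarrow> ennreal) \<Rightarrow> ('a \<Rightarrow> 'b) \<Rightarrow> bool" where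
  "iso_emb X dX Y dY f \<longleftrightarrow> f ` X \<subseteq> Y \<and> (\<forall>x\<in>X. \<forall>y\<in>X. dY (f x) (f y) = dX x y)"

end

theory Submission
  imports Defs "HOL-Analysis.Homotopy"
begin

text \<open>An R-forest is the same thing as a complete extended metric space in which any two points at
  finite distance are joined by a geodesic and every arc is the metric segment
  \<open>{q. d x q + d q y = d x y}\<close>.

  To amalgamate B and C over A, identify the two copies of A and let the distance from b to c be the
  infimum of \<open>d b a + d a c\<close> over the copies a of A. The copy of A is closed and convex in B and
  in C, so every point y of C at finite distance from it has a gate p, i.e. \<open>d a y = d a p + d p y\<close>
  for all a in A. Hence \<open>d b y = d b p + d p y\<close>, and geodesics from B to C are obtained by passing
  through the gate. An arc from B to C leaves B for the last time at a point of A, which is the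
  gate, so it is again a segment. Joint embedding is amalgamation over the empty forest.\<close>

lemma ext_metric_zero: "ext_metric X d \<Longrightarrow> x \<in> X \<Longrightarrow> d x x = 0"
  by (simp add: ext_metric_def)

lemma ext_metric_eq_0_iff: "ext_metric X d \<Longrightarrow> x \<in> X \<Longrightarrow> y \<in> X \<Longrightarrow> d x y = 0 \<longleftrightarrow> x = y"
  by (simp add: ext_metric_def)

lemma ext_metric_sym: "ext_metric X d \<Longrightarrow> x \<in> X \<Longrightarrow> y \<in> X \<Longrightarrow> d x y = d y x"
  by (simp add: ext_metric_def)

lemma ext_metric_triangle:
  "ext_metric X d \<Longrightarrow> x \<in> X \<Longrightarrow> y \<in> X \<Longrightarrow> z \<in> X \<Longrightarrow> d x z \<le> d x y + d y z"
  by (simp add: ext_metric_def)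

lemma ext_metric_finite_trans:
  assumes "ext_metric X d" "x \<in> X" "y \<in> X" "z \<in> X" "d x y < \<infinity>" "d y z < \<infinity>"
  shows "d x z < \<infinity>"
proof -
  have "d x z \<le> d x y + d y z" using ext_metric_triangle[OF assms(1-4)] .
  also have "\<dots> < \<infinity>" using assms(5,6) by simp
  finally show ?thesis .
qed

lemma ext_metric_subset: "ext_metric X d \<Longrightarrow> T \<subseteq> X \<Longrightarrow> ext_metric T d"
  unfolding ext_metric_def by (meson subsetD)

lemma ennreal_eps_imp_0:
  assumes "\<And>e::real. e > 0 \<Longrightarrow> x < ennreal e"
  shows "x = 0"
proof (cases x)
  case (real r)
  with assms[of r] show ?thesis by (cases "r > 0") auto
next
  case top
  with assms[of 1] show ?thesis by simp
qed

lemma ennreal_detour_0: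
  assumes "(a::ennreal) + c + (c + b) = e" "e \<le> a + b" "e < \<infinity>"
  shows "c = 0"
proof -
  have "a + c + (c + b) < \<infinity>" using assms(1,3) by simp
  then have "a < \<infinity>" "b < \<infinity>" "c < \<infinity>" by simp_all
  then obtain a' b' c' where "a = ennreal a'" "b = ennreal b'" "c = ennreal c'"
    and "a' \<ge> 0" "b' \<ge> 0" "c' \<ge> 0"
    by (auto simp: less_top_ennreal)
  moreover have "a + c + (c + b) \<le> a + b" using assms(1,2) by simp
  ultimately show ?thesis by (simp flip: ennreal_plus)
qed

lemma ennreal_add_less:
  assumes "a < ennreal e1" "b < ennreal e2" "e1 \<ge> 0" "e2 \<ge> 0"
  shows "a + b < ennreal (e1 + e2)"
  using add_strict_mono[OF assms(1,2)] assms(3,4) by (simp flip: ennreal_plus)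

subsection \<open>Betweenness and geodesic segments\<close>

definition metric_between :: "('a \<Rightarrow> 'a \<Rightarrow> ennreal) \<Rightarrow> 'a \<Rightarrow> 'a \<Rightarrow> 'a \<Rightarrow> bool" where
  "metric_between d x q y \<longleftrightarrow> d x q + d q y = d x y \<and> d x y < \<infinity>"

definition geodesic :: "'a set \<Rightarrow> ('a \<Rightarrow> 'a \<Rightarrow> ennreal) \<Rightarrow> 'a \<Rightarrow> 'a \<Rightarrow> (real \<Rightarrow> 'a) \<Rightarrow> bool" where
  "geodesic X d x y \<phi> \<longleftrightarrow> d x y < \<infinity> \<and> \<phi> 0 = x \<and> \<phi> (enn2real (d x y)) = y \<and>
     (\<forall>t\<in>{0..enn2real (d x y)}. \<phi> t \<in> X) \<and>
     (\<forall>s\<in>{0..enn2real (d x y)}. \<forall>t\<in>{0..enn2real (d x y)}. d (\<phi> s) (\<phi> t) = ennreal \<bar>s - t\<bar>)"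

lemma metric_between_finite:
  assumes "metric_between d x q y"
  shows "d x q < \<infinity>" "d q y < \<infinity>" "d x y < \<infinity>"
proof -
  have "d x q + d q y < \<infinity>" using assms by (simp add: metric_between_def)
  then show "d x q < \<infinity>" "d q y < \<infinity>" by simp_all
  show "d x y < \<infinity>" using assms by (simp add: metric_between_def)
qed

lemma metric_between_sym:
  "ext_metric X d \<Longrightarrow> x \<in> X \<Longrightarrow> q \<in> X \<Longrightarrow> y \<in> X \<Longrightarrow> metric_between d x q y \<Longrightarrow> metric_between d y q x"
  unfolding metric_between_def by (simp add: ext_metric_sym add.commute)

lemma metric_between_self:
  assumes "ext_metric X d" "x \<in> X" "q \<in> X" "metric_between d x q x"
  shows "q = x"
  using assms ext_metric_zero[OF assms(1,2)] ext_metric_eq_0_iff[OF assms(1,2,3)]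
  by (simp add: metric_between_def)

lemma metric_between_extend_right:
  assumes em: "ext_metric X d" and X: "x \<in> X" "q \<in> X" "c \<in> X" "y \<in> X"
    and bc: "metric_between d x c y" and bq: "metric_between d x q c"
  shows "metric_between d x q y"
proof -
  have "d x q + d q y \<le> d x q + (d q c + d c y)"
    using ext_metric_triangle[OF em X(2,3,4)] by (rule add_left_mono)
  also have "\<dots> = d x y" using bc bq by (simp add: metric_between_def add.assoc[symmetric])
  finally show ?thesis
    using ext_metric_triangle[OF em X(1,2,4)] bc by (simp add: metric_between_def antisym)
qed

lemma metric_between_extend_left:
  assumes em: "ext_metric X d" and X: "x \<in> X" "q \<in> X" "c \<in> X" "y \<in> X"
    and bc: "metric_between d x c y" and bq: "metric_between d c q y"
  shows "metric_between d x q y"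
proof -
  have "d x q + d q y \<le> d x c + d c q + d q y"
    using ext_metric_triangle[OF em X(1,3,2)] by (rule add_right_mono)
  also have "\<dots> = d x y" using bc bq by (simp add: metric_between_def add.assoc)
  finally show ?thesis
    using ext_metric_triangle[OF em X(1,2,4)] bc by (simp add: metric_between_def antisym)
qed

lemma geodesicD:
  assumes "geodesic X d x y \<phi>"
  shows "d x y < \<infinity>" "\<phi> 0 = x" "\<phi> (enn2real (d x y)) = y"
    "\<And>t. t \<in> {0..enn2real (d x y)} \<Longrightarrow> \<phi> t \<in> X"
    "\<And>s t. s \<in> {0..enn2real (d x y)} \<Longrightarrow> t \<in> {0..enn2real (d x y)} \<Longrightarrow> d (\<phi> s) (\<phi> t) = ennreal \<bar>s - t\<bar>"
    "d x y = ennreal (enn2real (d x y))"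
  using assms unfolding geodesic_def by (auto simp: less_top)

lemma geodesic_mono: "geodesic X d x y \<phi> \<Longrightarrow> X \<subseteq> Y \<Longrightarrow> geodesic Y d x y \<phi>"
  unfolding geodesic_def by blast

lemma geodesic_const: "ext_metric X d \<Longrightarrow> x \<in> X \<Longrightarrow> geodesic X d x x (\<lambda>_. x)"
  unfolding geodesic_def using ext_metric_zero[of X d x] by auto

lemma geodesic_dist:
  assumes "geodesic X d x y \<phi>" "t \<in> {0..enn2real (d x y)}"
  shows "d x (\<phi> t) = ennreal t" "d (\<phi> t) y = ennreal (enn2real (d x y) - t)"
  using geodesicD(5)[OF assms(1), of 0 t] geodesicD(5)[OF assms(1), of t "enn2real (d x y)"]
    geodesicD(2,3)[OF assms(1)] assms(2) by auto

lemma geodesic_between: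
  assumes "geodesic X d x y \<phi>" "t \<in> {0..enn2real (d x y)}"
  shows "metric_between d x (\<phi> t) y"
  using geodesic_dist[OF assms] geodesicD(1,6)[OF assms(1)] assms(2)
  by (simp add: metric_between_def flip: ennreal_plus)

lemma geodesic_inj:
  assumes "ext_metric X d" "geodesic X d x y \<phi>"
  shows "inj_on \<phi> {0..enn2real (d x y)}"
proof (rule inj_onI)
  fix s t assume st: "s \<in> {0..enn2real (d x y)}" "t \<in> {0..enn2real (d x y)}" "\<phi> s = \<phi> t"
  then have "d (\<phi> s) (\<phi> t) = 0" using ext_metric_zero[OF assms(1) geodesicD(4)[OF assms(2)]] by simp
  then show "s = t" using geodesicD(5)[OF assms(2) st(1,2)] by simp
qed

lemma geodesic_initial:
  assumes "geodesic X d x y \<phi>" "t \<in> {0..enn2real (d x y)}"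
  shows "geodesic X d x (\<phi> t) \<phi>"
proof -
  have "enn2real (d x (\<phi> t)) = t" using geodesic_dist(1)[OF assms] assms(2) by simp
  then show ?thesis
    using geodesicD[OF assms(1)] assms(2) geodesic_dist(1)[OF assms] unfolding geodesic_def by auto
qed

lemma geodesic_reverse:
  assumes "ext_metric X d" "geodesic X d x y \<phi>" "x \<in> X" "y \<in> X"
  shows "geodesic X d y x (\<lambda>t. \<phi> (enn2real (d x y) - t))"
  unfolding geodesic_def ext_metric_sym[OF assms(1,4,3)]
proof (intro conjI ballI)
  let ?L = "enn2real (d x y)"
  show "d x y < \<infinity>" "\<phi> (?L - 0) = y" "\<phi> (?L - ?L) = x" using geodesicD(1-3)[OF assms(2)] by simp_all
  fix s t assume "s \<in> {0..?L}" "t \<in> {0..?L}"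
  then show "\<phi> (?L - t) \<in> X" "d (\<phi> (?L - s)) (\<phi> (?L - t)) = ennreal \<bar>s - t\<bar>"
    using geodesicD(4)[OF assms(2), of "?L - t"] geodesicD(5)[OF assms(2), of "?L - s" "?L - t"]
    by (auto simp: abs_minus_commute)
qed

lemma image_reflect_interval:
  "(\<lambda>t. \<phi> (L - t)) ` {0..L} = \<phi> ` {0..(L::real)}"
  using image_image[of \<phi> "\<lambda>t. L - t" "{0..L}"] by simp

subsection \<open>Arcs\<close>

definition ext_continuous_on :: "real set \<Rightarrow> ('a \<Rightarrow> 'a \<Rightarrow> ennreal) \<Rightarrow> (real \<Rightarrow> 'a) \<Rightarrow> bool" where
  "ext_continuous_on T d \<gamma> \<longleftrightarrow> (\<forall>t\<in>T. \<forall>e::real. e > 0 \<longrightarrow>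
     (\<exists>\<delta>>0. \<forall>s\<in>T. \<bar>s - t\<bar> < \<delta> \<longrightarrow> d (\<gamma> s) (\<gamma> t) < ennreal e))"

lemma is_arc_iff:
  "is_arc X d x y A \<longleftrightarrow> (\<exists>\<gamma>. \<gamma> ` {0..1} = A \<and> A \<subseteq> X \<and> inj_on \<gamma> {0..1} \<and> \<gamma> 0 = x \<and> \<gamma> 1 = y \<and>
     ext_continuous_on {0..1} d \<gamma>)"
  unfolding is_arc_def ext_continuous_on_def ..

lemma is_arcI:
  "\<gamma> ` {0..1} = A \<Longrightarrow> A \<subseteq> X \<Longrightarrow> inj_on \<gamma> {0..1} \<Longrightarrow> \<gamma> 0 = x \<Longrightarrow> \<gamma> 1 = y \<Longrightarrow>
    ext_continuous_on {0..1} d \<gamma> \<Longrightarrow> is_arc X d x y A"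
  unfolding is_arc_iff by blast

lemma is_arcE:
  assumes "is_arc X d x y A"
  obtains \<gamma> where "\<gamma> ` {0..1} = A" "A \<subseteq> X" "inj_on \<gamma> {0..1}" "\<gamma> 0 = x" "\<gamma> 1 = y"
    "ext_continuous_on {0..1} d \<gamma>"
  using assms unfolding is_arc_iff by blast

lemma is_arc_endpoints:
  assumes "is_arc X d x y A"
  shows "x \<in> A" "y \<in> A" "A \<subseteq> X"
proof -
  obtain \<gamma> :: "real \<Rightarrow> 'a" where "\<gamma> ` {0..1} = A" "A \<subseteq> X" "\<gamma> 0 = x" "\<gamma> 1 = y"
    using is_arcE[OF assms] by metis
  moreover have "(0::real) \<in> {0..1}" "(1::real) \<in> {0..1}" by auto
  ultimately show "x \<in> A" "y \<in> A" "A \<subseteq> X" by blast+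
qed

lemma is_arc_restrict: "is_arc X d x y A \<Longrightarrow> A \<subseteq> T \<Longrightarrow> is_arc T d x y A"
  unfolding is_arc_iff by blast

lemma ext_continuous_on_reverse:
  assumes "ext_continuous_on {0..1} d \<gamma>"
  shows "ext_continuous_on {0..1} d (\<lambda>s. \<gamma> (1 - s))"
  unfolding ext_continuous_on_def
proof (intro ballI allI impI)
  fix t e :: real assume t: "t \<in> {0..1}" and e: "e > 0"
  have "1 - t \<in> {0..1}" using t by auto
  then obtain \<delta> where \<delta>: "\<delta> > 0" "\<forall>s\<in>{0..1}. \<bar>s - (1 - t)\<bar> < \<delta> \<longrightarrow> d (\<gamma> s) (\<gamma> (1 - t)) < ennreal e"
    using assms e unfolding ext_continuous_on_def by blast
  have "\<forall>s\<in>{0..1}. \<bar>s - t\<bar> < \<delta> \<longrightarrow> d (\<gamma> (1 - s)) (\<gamma> (1 - t)) < ennreal e"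
  proof (intro ballI impI)
    fix s :: real assume "s \<in> {0..1}" "\<bar>s - t\<bar> < \<delta>"
    then have "1 - s \<in> {0..1}" "\<bar>(1 - s) - (1 - t)\<bar> < \<delta>" by auto
    then show "d (\<gamma> (1 - s)) (\<gamma> (1 - t)) < ennreal e" using \<delta>(2) by blast
  qed
  then show "\<exists>\<delta>>0. \<forall>s\<in>{0..1}. \<bar>s - t\<bar> < \<delta> \<longrightarrow> d (\<gamma> (1 - s)) (\<gamma> (1 - t)) < ennreal e"
    using \<delta>(1) by blast
qed

lemma is_arc_reverse:
  assumes "is_arc X d x y A"
  shows "is_arc X d y x A"
proof -
  obtain \<gamma> where g: "\<gamma> ` {0..1} = A" "A \<subseteq> X" "inj_on \<gamma> {0..1}" "\<gamma> 0 = x" "\<gamma> 1 = y"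
    "ext_continuous_on {0..1} d \<gamma>"
    using assms by (rule is_arcE)
  show ?thesis
  proof (rule is_arcI[of "\<lambda>s. \<gamma> (1 - s)"])
    show "(\<lambda>s. \<gamma> (1 - s)) ` {0..1} = A" using image_reflect_interval[of \<gamma> 1] g(1) by simp
    show "inj_on (\<lambda>s. \<gamma> (1 - s)) {0..1}"
    proof (rule inj_onI)
      fix s t :: real assume "s \<in> {0..1}" "t \<in> {0..1}" "\<gamma> (1 - s) = \<gamma> (1 - t)"
      moreover have "1 - s \<in> {0..1}" "1 - t \<in> {0..1}" using calculation by auto
      ultimately have "1 - s = 1 - t" using g(3) by (auto dest: inj_onD)
      then show "s = t" by simp
    qed
  qed (use g ext_continuous_on_reverse in auto)
qed

lemma ext_continuous_on_subset:
  assumes "ext_continuous_on T d \<psi>" "T' \<subseteq> T"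
  shows "ext_continuous_on T' d \<psi>"
  unfolding ext_continuous_on_def
proof (intro ballI allI impI)
  fix t e :: real assume "t \<in> T'" "e > 0"
  then obtain \<delta> where "\<delta> > 0" "\<forall>s\<in>T. \<bar>s - t\<bar> < \<delta> \<longrightarrow> d (\<psi> s) (\<psi> t) < ennreal e"
    using assms unfolding ext_continuous_on_def by blast
  then show "\<exists>\<delta>>0. \<forall>s\<in>T'. \<bar>s - t\<bar> < \<delta> \<longrightarrow> d (\<psi> s) (\<psi> t) < ennreal e" using assms(2) by blast
qed

lemma ext_continuous_on_lipschitz:
  assumes "\<forall>s\<in>T. \<forall>t\<in>T. d (\<psi> s) (\<psi> t) \<le> ennreal \<bar>s - t\<bar>"
  shows "ext_continuous_on T d \<psi>"
  unfolding ext_continuous_on_def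
proof (intro ballI allI impI)
  fix t e :: real assume t: "t \<in> T" and e: "e > 0"
  have "d (\<psi> s) (\<psi> t) < ennreal e" if "s \<in> T" "\<bar>s - t\<bar> < e" for s
  proof -
    have "d (\<psi> s) (\<psi> t) \<le> ennreal \<bar>s - t\<bar>" using assms that(1) t by blast
    also have "\<dots> < ennreal e" using that(2) e by (simp add: ennreal_lessI)
    finally show ?thesis .
  qed
  then show "\<exists>\<delta>>0. \<forall>s\<in>T. \<bar>s - t\<bar> < \<delta> \<longrightarrow> d (\<psi> s) (\<psi> t) < ennreal e" using e by blast
qed

lemma is_arc_of_continuous_on:
  assumes ab: "a < b" and pc: "ext_continuous_on {a..b} d \<psi>" and inj: "inj_on \<psi> {a..b}"
    and X: "\<psi> ` {a..b} \<subseteq> X"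
  shows "is_arc X d (\<psi> a) (\<psi> b) (\<psi> ` {a..b})"
proof -
  define h where "h = (\<lambda>t::real. a + (b - a) * t)"
  have hI: "h t \<in> {a..b}" if "t \<in> {0..1}" for t
  proof -
    have "(b - a) * t \<ge> 0" "(b - a) * t \<le> (b - a)" using that ab by (auto intro: mult_left_le)
    then show ?thesis by (simp add: h_def)
  qed
  have im: "h ` {0..1} = {a..b}"
  proof
    show "{a..b} \<subseteq> h ` {0..1}"
    proof
      fix u assume u: "u \<in> {a..b}"
      have "u = h ((u - a) / (b - a))" using ab by (simp add: h_def)
      moreover have "(u - a) / (b - a) \<in> {0..1}" using u ab by (auto simp: field_simps)
      ultimately show "u \<in> h ` {0..1}" by blast
    qed
  qed (use hI in blast)
  have "ext_continuous_on {0..1} d (\<psi> \<circ> h)"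
    unfolding ext_continuous_on_def
  proof (intro ballI allI impI)
    fix t e :: real assume t: "t \<in> {0..1}" and e: "e > 0"
    obtain \<delta> where \<delta>: "\<delta> > 0" "\<forall>s\<in>{a..b}. \<bar>s - h t\<bar> < \<delta> \<longrightarrow> d (\<psi> s) (\<psi> (h t)) < ennreal e"
      using pc hI[OF t] e unfolding ext_continuous_on_def by blast
    have "\<forall>s\<in>{0..1}. \<bar>s - t\<bar> < \<delta> / (b - a) \<longrightarrow> d ((\<psi> \<circ> h) s) ((\<psi> \<circ> h) t) < ennreal e"
    proof (intro ballI impI)
      fix s assume s: "s \<in> {0..1}" and st: "\<bar>s - t\<bar> < \<delta> / (b - a)"
      have "\<bar>h s - h t\<bar> = (b - a) * \<bar>s - t\<bar>"
        using ab by (simp add: h_def abs_mult right_diff_distrib[symmetric])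
      also have "\<dots> < \<delta>" using st ab by (simp add: field_simps)
      finally show "d ((\<psi> \<circ> h) s) ((\<psi> \<circ> h) t) < ennreal e" using \<delta>(2) hI[OF s] by auto
    qed
    then show "\<exists>\<delta>>0. \<forall>s\<in>{0..1}. \<bar>s - t\<bar> < \<delta> \<longrightarrow> d ((\<psi> \<circ> h) s) ((\<psi> \<circ> h) t) < ennreal e"
      using \<delta>(1) ab by (intro exI[of _ "\<delta> / (b - a)"]) simp
  qed
  moreover have "inj_on (\<psi> \<circ> h) {0..1}"
  proof (rule comp_inj_on)
    show "inj_on h {0..1}" using ab by (auto simp: inj_on_def h_def)
    show "inj_on \<psi> (h ` {0..1})" using inj im by simp
  qed
  moreover have "(\<psi> \<circ> h) ` {0..1} = \<psi> ` {a..b}" by (metis im image_comp)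
  ultimately show ?thesis
    using X by (intro is_arcI[of "\<psi> \<circ> h"]) (auto simp: h_def)
qed

lemma is_arc_subpath:
  assumes "ext_continuous_on {0..1} d \<gamma>" "inj_on \<gamma> {0..1}" "\<gamma> ` {0..1} \<subseteq> X"
    and "0 \<le> a" "a < b" "b \<le> 1"
  shows "is_arc X d (\<gamma> a) (\<gamma> b) (\<gamma> ` {a..b})"
proof -
  have "{a..b} \<subseteq> {0..1}" using assms(4-6) by auto
  then show ?thesis
    using is_arc_of_continuous_on[OF assms(5) ext_continuous_on_subset[OF assms(1)]] assms(2,3)
    by (meson image_mono inj_on_subset order_trans)
qed

lemma is_arc_of_lipschitz:
  assumes "L > 0" "\<forall>t\<in>{0..L}. \<psi> t \<in> X" "inj_on \<psi> {0..L}"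
    "\<forall>s\<in>{0..L}. \<forall>t\<in>{0..L}. d (\<psi> s) (\<psi> t) \<le> ennreal \<bar>s - t\<bar>"
  shows "is_arc X d (\<psi> 0) (\<psi> L) (\<psi> ` {0..L})"
proof -
  have "ext_continuous_on {0..L} d \<psi>" by (rule ext_continuous_on_lipschitz) (rule assms(4))
  then show ?thesis using is_arc_of_continuous_on[OF assms(1) _ assms(3)] assms(2) by blast
qed

lemma geodesic_is_arc:
  assumes "ext_metric X d" "geodesic X d x y \<phi>" "x \<noteq> y"
  shows "is_arc X d x y (\<phi> ` {0..enn2real (d x y)})"
proof -
  have "enn2real (d x y) \<noteq> 0" using geodesicD(2,3)[OF assms(2)] assms(3) by auto
  then have pos: "enn2real (d x y) > 0" by (simp add: order_less_le)
  have "is_arc X d (\<phi> 0) (\<phi> (enn2real (d x y))) (\<phi> ` {0..enn2real (d x y)})"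
    by (rule is_arc_of_lipschitz[OF pos])
      (use geodesicD[OF assms(2)] geodesic_inj[OF assms(1,2)] in auto)
  then show ?thesis using geodesicD(2,3)[OF assms(2)] by simp
qed

definition join_paths :: "(real \<Rightarrow> 'a) \<Rightarrow> real \<Rightarrow> (real \<Rightarrow> 'a) \<Rightarrow> real \<Rightarrow> 'a" where
  "join_paths \<phi> L \<psi> t = (if t \<le> L then \<phi> t else \<psi> (t - L))"

lemma join_paths_image:
  assumes "0 \<le> L1" "0 \<le> L2" "\<phi>1 L1 = \<phi>2 0"
  shows "join_paths \<phi>1 L1 \<phi>2 ` {0..L1 + L2} = \<phi>1 ` {0..L1} \<union> \<phi>2 ` {0..L2}"
proof
  show "join_paths \<phi>1 L1 \<phi>2 ` {0..L1 + L2} \<subseteq> \<phi>1 ` {0..L1} \<union> \<phi>2 ` {0..L2}"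
    by (auto simp: join_paths_def)
  show "\<phi>1 ` {0..L1} \<union> \<phi>2 ` {0..L2} \<subseteq> join_paths \<phi>1 L1 \<phi>2 ` {0..L1 + L2}"
  proof
    fix z assume "z \<in> \<phi>1 ` {0..L1} \<union> \<phi>2 ` {0..L2}"
    then consider t where "t \<in> {0..L1}" "z = \<phi>1 t" | u where "u \<in> {0..L2}" "z = \<phi>2 u" by blast
    then show "z \<in> join_paths \<phi>1 L1 \<phi>2 ` {0..L1 + L2}"
    proof cases
      case 1
      then have "z = join_paths \<phi>1 L1 \<phi>2 t" "t \<in> {0..L1 + L2}" using assms
        by (auto simp: join_paths_def)
      then show ?thesis by blast
    next
      case 2
      then have "z = join_paths \<phi>1 L1 \<phi>2 (u + L1)" "u + L1 \<in> {0..L1 + L2}"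
        using assms by (auto simp: join_paths_def)
      then show ?thesis by blast
    qed
  qed
qed

lemma join_paths_lipschitz:
  assumes em: "ext_metric X d" and g1: "geodesic X d x q \<phi>1" and g2: "geodesic X d q y \<phi>2"
  defines "L1 \<equiv> enn2real (d x q)" and "L2 \<equiv> enn2real (d q y)"
  shows "\<forall>t\<in>{0..L1 + L2}. join_paths \<phi>1 L1 \<phi>2 t \<in> X"
    and "join_paths \<phi>1 L1 \<phi>2 0 = x" and "join_paths \<phi>1 L1 \<phi>2 (L1 + L2) = y"
    and "\<forall>s\<in>{0..L1 + L2}. \<forall>t\<in>{0..L1 + L2}.
           d (join_paths \<phi>1 L1 \<phi>2 s) (join_paths \<phi>1 L1 \<phi>2 t) \<le> ennreal \<bar>s - t\<bar>"
proof -
  let ?\<psi> = "join_paths \<phi>1 L1 \<phi>2"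
  have L1: "L1 \<ge> 0" and L2: "L2 \<ge> 0" by (simp_all add: L1_def L2_def)
  have p1: "\<phi>1 0 = x" "\<phi>1 L1 = q" "\<And>t. t \<in> {0..L1} \<Longrightarrow> \<phi>1 t \<in> X"
    "\<And>s t. s \<in> {0..L1} \<Longrightarrow> t \<in> {0..L1} \<Longrightarrow> d (\<phi>1 s) (\<phi>1 t) = ennreal \<bar>s - t\<bar>"
    using geodesicD[OF g1] by (auto simp: L1_def)
  have p2: "\<phi>2 0 = q" "\<phi>2 L2 = y" "\<And>t. t \<in> {0..L2} \<Longrightarrow> \<phi>2 t \<in> X"
    "\<And>s t. s \<in> {0..L2} \<Longrightarrow> t \<in> {0..L2} \<Longrightarrow> d (\<phi>2 s) (\<phi>2 t) = ennreal \<bar>s - t\<bar>"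
    using geodesicD[OF g2] by (auto simp: L2_def)
  have qX: "q \<in> X" using p1(2,3) L1 by force
  show "\<forall>t\<in>{0..L1 + L2}. ?\<psi> t \<in> X" using p1(3) p2(3) L1 L2 by (auto simp: join_paths_def)
  show "?\<psi> 0 = x" using p1(1) L1 by (simp add: join_paths_def)
  show "?\<psi> (L1 + L2) = y"
    using p1(2) p2 L2 by (cases "L2 = 0") (auto simp: join_paths_def)
  have cross: "d (\<phi>1 s) (\<phi>2 u) \<le> ennreal (L1 - s + u)" if "s \<in> {0..L1}" "u \<in> {0..L2}" for s u
  proof -
    have "d (\<phi>1 s) (\<phi>2 u) \<le> d (\<phi>1 s) q + d q (\<phi>2 u)"
      using ext_metric_triangle[OF em p1(3)[OF that(1)] qX p2(3)[OF that(2)]] .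
    also have "d (\<phi>1 s) q = ennreal (L1 - s)" using p1(4)[OF that(1), of L1] p1(2) L1 that by auto
    also have "d q (\<phi>2 u) = ennreal u" using p2(4)[of 0 u] p2(1) L2 that by auto
    also have "ennreal (L1 - s) + ennreal u = ennreal (L1 - s + u)" using that
      by (simp flip: ennreal_plus)
    finally show ?thesis .
  qed
  show "\<forall>s\<in>{0..L1 + L2}. \<forall>t\<in>{0..L1 + L2}. d (?\<psi> s) (?\<psi> t) \<le> ennreal \<bar>s - t\<bar>"
  proof (intro ballI)
    fix s t assume s: "s \<in> {0..L1 + L2}" and t: "t \<in> {0..L1 + L2}"
    consider "s \<le> L1" "t \<le> L1" | "s \<le> L1" "\<not> t \<le> L1" | "\<not> s \<le> L1" "t \<le> L1" | "\<not> s \<le> L1" "\<not> t \<le> L1"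
      by blast
    then show "d (?\<psi> s) (?\<psi> t) \<le> ennreal \<bar>s - t\<bar>"
    proof cases
      case 1 then show ?thesis using p1(4) s t by (simp add: join_paths_def)
    next
      case 2
      then have "d (?\<psi> s) (?\<psi> t) \<le> ennreal (L1 - s + (t - L1))"
        using cross[of s "t - L1"] s t by (simp add: join_paths_def)
      then show ?thesis using 2 by simp
    next
      case 3
      have "t \<in> {0..L1}" "s - L1 \<in> {0..L2}" using 3 s t by auto
      then have "d (?\<psi> s) (?\<psi> t) = d (\<phi>1 t) (\<phi>2 (s - L1))"
        using 3 ext_metric_sym[OF em p2(3) p1(3)] by (simp add: join_paths_def)
      also have "\<dots> \<le> ennreal (L1 - t + (s - L1))" using cross[of t "s - L1"] s t 3 by simp
      finally show ?thesis using 3 by simp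
    next
      case 4 then show ?thesis using p2(4)[of "s - L1" "t - L1"] s t by (simp add: join_paths_def)
    qed
  qed
qed

text \<open>The triangle inequality through \<open>\<psi> s\<close> and \<open>\<psi> t\<close> leaves no slack when \<open>d x y = L\<close>.\<close>

lemma lipschitz_path_is_geodesic:
  assumes em: "ext_metric X d" and inX: "\<forall>t\<in>{0..L}. \<psi> t \<in> X" and "\<psi> 0 = x" "\<psi> L = y"
    and dxy: "d x y = ennreal L" and L: "L \<ge> 0"
    and lip: "\<forall>s\<in>{0..L}. \<forall>t\<in>{0..L}. d (\<psi> s) (\<psi> t) \<le> ennreal \<bar>s - t\<bar>"
  shows "geodesic X d x y \<psi>"
proof -
  have x: "x \<in> X" and y: "y \<in> X" using inX assms(3,4) L by force+
  have ge: "ennreal (t - s) \<le> d (\<psi> s) (\<psi> t)" if s: "s \<in> {0..L}" and t: "t \<in> {0..L}" and st: "s \<le> t"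
    for s t
  proof -
    have sX: "\<psi> s \<in> X" and tX: "\<psi> t \<in> X" using inX s t by blast+
    have "d (\<psi> s) (\<psi> t) \<le> ennreal \<bar>s - t\<bar>" using lip s t by blast
    then have "d (\<psi> s) (\<psi> t) < \<infinity>" using le_less_trans[OF _ ennreal_less_top] by simp
    then obtain r where r: "r \<ge> 0" "d (\<psi> s) (\<psi> t) = ennreal r" by (auto simp: less_top_ennreal)
    have xs: "d x (\<psi> s) \<le> ennreal s" using lip[rule_format, of 0 s] s L assms(3) by simp
    have ty: "d (\<psi> t) y \<le> ennreal (L - t)" using lip[rule_format, of t L] t L assms(4) by simp
    have "ennreal L \<le> d x (\<psi> s) + d (\<psi> s) y" using dxy ext_metric_triangle[OF em x sX y] by simp
    also have "\<dots> \<le> d x (\<psi> s) + (d (\<psi> s) (\<psi> t) + d (\<psi> t) y)"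
      using ext_metric_triangle[OF em sX tX y] by (rule add_left_mono)
    also have "\<dots> \<le> ennreal s + (ennreal r + ennreal (L - t))"
      using xs ty r(2) by (intro add_mono) simp_all
    also have "\<dots> = ennreal (s + (r + (L - t)))"
      using s t r(1)
        by (simp only: ennreal_plus[symmetric] add_nonneg_nonneg diff_ge_0_iff_ge atLeastAtMost_iff)
    finally have "L \<le> s + (r + (L - t))" using s t r(1) by (subst (asm) ennreal_le_iff) auto
    then show ?thesis using r by (simp add: ennreal_leI)
  qed
  have eq: "d (\<psi> s) (\<psi> t) = ennreal \<bar>s - t\<bar>" if "s \<in> {0..L}" "t \<in> {0..L}" "s \<le> t" for s t
  proof -
    have "d (\<psi> s) (\<psi> t) \<le> ennreal (t - s)" using lip that by fastforce
    then show ?thesis using antisym[OF _ ge[OF that]] that(3) by simp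
  qed
  have "d (\<psi> s) (\<psi> t) = ennreal \<bar>s - t\<bar>" if "s \<in> {0..L}" "t \<in> {0..L}" for s t
  proof (cases "s \<le> t")
    case False
    then have "d (\<psi> t) (\<psi> s) = ennreal \<bar>s - t\<bar>" using eq[OF that(2,1)]
      by (simp add: abs_minus_commute)
    then show ?thesis using ext_metric_sym[OF em] inX that by metis
  qed (use eq that in blast)
  then show ?thesis unfolding geodesic_def using dxy L inX assms(3,4) by simp
qed

lemma geodesic_join:
  assumes em: "ext_metric X d" and g1: "geodesic X d x q \<phi>1" and g2: "geodesic X d q y \<phi>2"
    and b: "metric_between d x q y"
  shows "geodesic X d x y (join_paths \<phi>1 (enn2real (d x q)) \<phi>2)"
proof (rule lipschitz_path_is_geodesic[OF em join_paths_lipschitz(1-3)[OF em g1 g2] _ _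
      join_paths_lipschitz(4)[OF em g1 g2]])
  show "d x y = ennreal (enn2real (d x q) + enn2real (d q y))"
    using b geodesicD(6)[OF g1] geodesicD(6)[OF g2]
    by (metis enn2real_nonneg ennreal_plus metric_between_def)
qed simp

lemma is_arc_join:
  assumes em: "ext_metric X d" and g1: "geodesic X d x q \<phi>1" and g2: "geodesic X d q y \<phi>2"
    and xy: "x \<noteq> y"
    and meet: "\<And>s u. s \<in> {0..enn2real (d x q)} \<Longrightarrow> u \<in> {0..enn2real (d q y)} \<Longrightarrow> \<phi>1 s = \<phi>2 u \<Longrightarrow>
      \<phi>1 s = q"
  shows "is_arc X d x y (\<phi>1 ` {0..enn2real (d x q)} \<union> \<phi>2 ` {0..enn2real (d q y)})"
proof -
  define L1 where "L1 = enn2real (d x q)"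
  define L2 where "L2 = enn2real (d q y)"
  let ?\<psi> = "join_paths \<phi>1 L1 \<phi>2"
  note lip = join_paths_lipschitz[OF em g1 g2, folded L1_def L2_def]
  have L1: "L1 \<ge> 0" and L2: "L2 \<ge> 0" by (simp_all add: L1_def L2_def)
  have Lpos: "L1 + L2 > 0"
  proof (rule ccontr)
    assume "\<not> L1 + L2 > 0"
    then have "L1 + L2 = 0" using L1 L2 by simp
    then show False using lip(2,3) xy by simp
  qed
  have crossinj: False if "s \<in> {0..L1}" "u \<in> {0..L2}" "u > 0" "\<phi>1 s = \<phi>2 u" for s u
  proof -
    have "\<phi>2 u = \<phi>2 0" using meet that geodesicD(2)[OF g2] by (auto simp: L1_def L2_def)
    then have "ennreal \<bar>0 - u\<bar> = 0"
      using geodesicD(5)[OF g2, of 0 u] ext_metric_zero[OF em geodesicD(4)[OF g2, of 0]] that L2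
      by (auto simp: L2_def)
    then show False using that by simp
  qed
  have inj: "inj_on ?\<psi> {0..L1 + L2}"
  proof (rule inj_onI)
    fix s t assume s: "s \<in> {0..L1 + L2}" and t: "t \<in> {0..L1 + L2}" and e: "?\<psi> s = ?\<psi> t"
    consider "s \<le> L1" "t \<le> L1" | "s \<le> L1" "\<not> t \<le> L1" | "\<not> s \<le> L1" "t \<le> L1" | "\<not> s \<le> L1" "\<not> t \<le> L1"
      by blast
    then show "s = t"
    proof cases
      case 1 then show ?thesis
        using e geodesic_inj[OF em g1] s t by (auto simp: join_paths_def L1_def dest: inj_onD)
    next
      case 2 then show ?thesis using crossinj[of s "t - L1"] e s t by (auto simp: join_paths_def)
    next
      case 3 then show ?thesis using crossinj[of t "s - L1"] e s t by (auto simp: join_paths_def)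
    next
      case 4
      then have "s - L1 = t - L1"
        using e geodesic_inj[OF em g2] s t by (auto simp: join_paths_def L2_def dest: inj_onD)
      then show ?thesis by simp
    qed
  qed
  have "is_arc X d x y (?\<psi> ` {0..L1 + L2})"
    using is_arc_of_lipschitz[OF Lpos lip(1) inj lip(4)] lip(2,3) by simp
  moreover have "\<phi>1 L1 = \<phi>2 0" using geodesicD(3)[OF g1] geodesicD(2)[OF g2] by (simp add: L1_def)
  then have "?\<psi> ` {0..L1 + L2} = \<phi>1 ` {0..L1} \<union> \<phi>2 ` {0..L2}" by (rule join_paths_image[OF L1 L2])
  ultimately show ?thesis by (simp add: L1_def L2_def)
qed

lemma is_arc_finite_dist:
  assumes em: "ext_metric X d" and A: "is_arc X d x y A" and z: "z \<in> A"
  shows "d x z < \<infinity>"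
proof -
  obtain \<gamma> :: "real \<Rightarrow> 'a" where g: "\<gamma> ` {0..1} = A" "A \<subseteq> X" "\<gamma> 0 = x" "ext_continuous_on {0..1} d \<gamma>"
    using is_arcE[OF A] by metis
  have gX: "\<gamma> t \<in> X" if "t \<in> {0..1}" for t using g(1,2) that by blast
  obtain t where t: "t \<in> {0..1}" "z = \<gamma> t" using g(1) z by blast
  have "d (\<gamma> 0) (\<gamma> t) < \<infinity>"
  proof (rule connected_equivalence_relation[OF connected_Icc, where R = "\<lambda>s t. d (\<gamma> s) (\<gamma> t) < \<infinity>"])
    show "0 \<in> {0..1::real}" "t \<in> {0..1}" using t by auto
    show "d (\<gamma> u) (\<gamma> s) < \<infinity>" if "d (\<gamma> s) (\<gamma> u) < \<infinity>" "s \<in> {0..1}" "u \<in> {0..1}" for s u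
      using that(1) ext_metric_sym[OF em gX[OF that(2)] gX[OF that(3)]] by simp
    show "d (\<gamma> s) (\<gamma> w) < \<infinity>"
      if "d (\<gamma> s) (\<gamma> u) < \<infinity>" "d (\<gamma> u) (\<gamma> w) < \<infinity>" "s \<in> {0..1}" "u \<in> {0..1}" "w \<in> {0..1}"
      for s u w
      using ext_metric_finite_trans[OF em gX[OF that(3)] gX[OF that(4)] gX[OF that(5)] that(1,2)] .
    fix a :: real assume a: "a \<in> {0..1}"
    obtain \<delta> where \<delta>: "\<delta> > 0" "\<forall>s\<in>{0..1}. \<bar>s - a\<bar> < \<delta> \<longrightarrow> d (\<gamma> s) (\<gamma> a) < ennreal 1"
      using g(4) a unfolding ext_continuous_on_def by (meson zero_less_one)
    have near: "d (\<gamma> a) (\<gamma> s) < \<infinity>" if s: "s \<in> {0..1} \<inter> ball a \<delta>" for s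
    proof -
      have "dist s a < \<delta>" using s by (simp add: dist_commute)
      then have lt1: "d (\<gamma> s) (\<gamma> a) < ennreal 1" using \<delta>(2) s by (simp add: dist_real_def)
      have "d (\<gamma> s) (\<gamma> a) < \<infinity>" using order.strict_trans[OF lt1 ennreal_less_top] by simp
      moreover have "s \<in> {0..1}" using s by blast
      ultimately show ?thesis using ext_metric_sym[OF em gX[OF a] gX] by simp
    qed
    show "\<exists>T. openin (top_of_set {0..1}) T \<and> a \<in> T \<and> (\<forall>s\<in>T. d (\<gamma> a) (\<gamma> s) < \<infinity>)"
    proof (intro exI conjI)
      show "openin (top_of_set {0..1}) ({0..1} \<inter> ball a \<delta>)" by (rule openin_open_Int[OF open_ball])
      show "a \<in> {0..1} \<inter> ball a \<delta>" using a \<delta>(1) by simp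
    qed (use near in blast)
  qed
  then show ?thesis using g(3) t by simp
qed

subsection \<open>R-forests are the complete geodesic spaces whose arcs are segments\<close>

lemma R_forest_ext_metric: "R_forest X d \<Longrightarrow> ext_metric X d"
  by (simp add: R_forest_def)

lemma R_forest_ext_complete: "R_forest X d \<Longrightarrow> ext_complete X d"
  by (simp add: R_forest_def)

lemma ext_complete_component:
  assumes em: "ext_metric X d" and c: "ext_complete X d" and x: "x \<in> X"
  shows "ext_complete {y\<in>X. d x y < \<infinity>} d"
  unfolding ext_complete_def
proof (intro allI impI)
  fix s assume h: "(\<forall>n. s n \<in> {y\<in>X. d x y < \<infinity>}) \<and> ext_cauchy d s"
  then have "ext_converges_in X d s" using c unfolding ext_complete_def by blast
  then obtain z where z: "z \<in> X" "\<forall>e::real. e > 0 \<longrightarrow> (\<exists>N. \<forall>n\<ge>N. d (s n) z < ennreal e)"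
    unfolding ext_converges_in_def by blast
  obtain N where N: "d (s N) z < ennreal 1" using z(2) by (meson order.refl zero_less_one)
  have "d (s N) z < \<infinity>" using order.strict_trans[OF N ennreal_less_top] by simp
  moreover have "d x (s N) < \<infinity>" "s N \<in> X" using h by auto
  ultimately have "d x z < \<infinity>" using ext_metric_finite_trans[OF em x _ z(1)] by blast
  then show "ext_converges_in {y\<in>X. d x y < \<infinity>} d s"
    unfolding ext_converges_in_def using z by blast
qed

lemma isometric_interval_endpoints:
  assumes bij: "bij_betw \<phi> {0..L} A"
    and isom: "\<forall>s\<in>{0..L}. \<forall>t\<in>{0..L}. d (\<phi> s) (\<phi> t) = ennreal \<bar>s - t\<bar>"
    and x: "x \<in> A" and y: "y \<in> A" and dxy: "d x y = ennreal L" and L: "L \<ge> 0"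
  obtains "\<phi> 0 = x" "\<phi> L = y" | "\<phi> 0 = y" "\<phi> L = x"
proof -
  have im: "\<phi> ` {0..L} = A" using bij by (simp add: bij_betw_def)
  obtain s0 where s0: "s0 \<in> {0..L}" "\<phi> s0 = x" using x im by blast
  obtain s1 where s1: "s1 \<in> {0..L}" "\<phi> s1 = y" using y im by blast
  have "ennreal \<bar>s0 - s1\<bar> = ennreal L" using isom s0 s1 dxy by metis
  then have "\<bar>s0 - s1\<bar> = L" using L by simp
  then have "(s0 = 0 \<and> s1 = L) \<or> (s0 = L \<and> s1 = 0)" using s0(1) s1(1)
    by (auto simp: abs_if split: if_splits)
  then show ?thesis using that s0 s1 by blast
qed

lemma R_forest_geodesic:
  assumes RF: "R_forest X d" and x: "x \<in> X" and y: "y \<in> X" and f: "d x y < \<infinity>"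
  obtains \<phi> where "geodesic X d x y \<phi>"
proof (cases "x = y")
  case True
  then show ?thesis using geodesic_const[OF R_forest_ext_metric[OF RF] x] that by blast
next
  case False
  have em: "ext_metric X d" using RF by (rule R_forest_ext_metric)
  define T where "T = {z\<in>X. d x z < \<infinity>}"
  have RT: "R_tree T d" using RF x by (simp add: R_forest_def T_def)
  have "x \<in> T" "y \<in> T" using x y f ext_metric_zero[OF em x] by (simp_all add: T_def)
  then obtain A where A: "is_arc T d x y A" and iso: "isometric_to_interval d A (enn2real (d x y))"
    using RT False unfolding R_tree_def by blast
  define L where "L = enn2real (d x y)"
  obtain \<phi> where bij: "bij_betw \<phi> {0..L} A"
    and isom: "\<forall>s\<in>{0..L}. \<forall>t\<in>{0..L}. d (\<phi> s) (\<phi> t) = ennreal \<bar>s - t\<bar>"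
    using iso unfolding isometric_to_interval_def L_def by blast
  have dxy: "d x y = ennreal L" using f by (simp add: L_def less_top)
  have inX: "\<forall>t\<in>{0..L}. \<phi> t \<in> X"
    using bij is_arc_endpoints(3)[OF A] by (auto simp: bij_betw_def T_def)
  have L0: "L \<ge> 0" by (simp add: L_def)
  from isometric_interval_endpoints[OF bij isom is_arc_endpoints(1,2)[OF A] dxy L0]
  show ?thesis
  proof cases
    case 1
    have "geodesic X d x y \<phi>" unfolding geodesic_def L_def[symmetric] using f 1 inX isom
      by simp
    then show ?thesis by (rule that)
  next
    case 2
    have dyx: "d y x = d x y" using ext_metric_sym[OF em x y] by simp
    have "geodesic X d y x \<phi>" unfolding geodesic_def dyx L_def[symmetric] using f 2 inX isom by simp
    then show ?thesis using geodesic_reverse[OF em _ y x] that by blast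
  qed
qed

lemma isometric_interval_subset_segment:
  assumes bij: "bij_betw \<phi> {0..L} A"
    and isom: "\<forall>s\<in>{0..L}. \<forall>t\<in>{0..L}. d (\<phi> s) (\<phi> t) = ennreal \<bar>s - t\<bar>"
    and x: "x \<in> A" and y: "y \<in> A" and dxy: "d x y = ennreal L" and L: "L \<ge> 0"
  shows "A \<subseteq> {q. metric_between d x q y}"
proof
  fix q assume "q \<in> A"
  then obtain t where t: "t \<in> {0..L}" "\<phi> t = q" using bij by (auto simp: bij_betw_def)
  have ends: "0 \<in> {0..L}" "L \<in> {0..L}" using L by auto
  from isometric_interval_endpoints[OF bij isom x y dxy L]
  have "d x q + d q y = ennreal L"
  proof cases
    case 1
    have "d x q = ennreal \<bar>0 - t\<bar>" using isom[rule_format, OF ends(1) t(1)] 1 t(2) by simp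
    moreover have "d q y = ennreal \<bar>t - L\<bar>" using isom[rule_format, OF t(1) ends(2)] 1 t(2) by simp
    ultimately have "d x q = ennreal t" "d q y = ennreal (L - t)" using t(1) by auto
    then show ?thesis using t by (simp flip: ennreal_plus)
  next
    case 2
    have "d x q = ennreal \<bar>L - t\<bar>" using isom[rule_format, OF ends(2) t(1)] 2 t(2) by simp
    moreover have "d q y = ennreal \<bar>t - 0\<bar>" using isom[rule_format, OF t(1) ends(1)] 2 t(2) by simp
    ultimately have "d x q = ennreal (L - t)" "d q y = ennreal t" using t(1) by auto
    then show ?thesis using t by (simp flip: ennreal_plus)
  qed
  then show "q \<in> {q. metric_between d x q y}" unfolding metric_between_def using dxy by simp
qed

lemma R_forest_arcD:
  assumes RF: "R_forest X d" and xy: "x \<noteq> y" and A: "is_arc X d x y A"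
  shows "d x y < \<infinity>" and "\<And>B. is_arc X d x y B \<Longrightarrow> B = A"
    and "isometric_to_interval d A (enn2real (d x y))"
proof -
  have em: "ext_metric X d" using RF by (rule R_forest_ext_metric)
  have x: "x \<in> X" using is_arc_endpoints[OF A] by blast
  define T where "T = {z\<in>X. d x z < \<infinity>}"
  have RT: "R_tree T d" using RF x by (simp add: R_forest_def T_def)
  have in_T: "B \<subseteq> T" if "is_arc X d x y B" for B
    using is_arc_finite_dist[OF em that] is_arc_endpoints(3)[OF that] by (auto simp: T_def)
  have AT: "is_arc T d x y A" using is_arc_restrict[OF A in_T[OF A]] .
  have xT: "x \<in> T" and yT: "y \<in> T" using is_arc_endpoints[OF AT] by blast+
  show "d x y < \<infinity>" using yT by (simp add: T_def)
  show "B = A" if "is_arc X d x y B" for B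
    using RT xT yT xy AT is_arc_restrict[OF that in_T[OF that]] unfolding R_tree_def by blast
  show "isometric_to_interval d A (enn2real (d x y))"
    using RT xT yT xy AT unfolding R_tree_def by blast
qed

lemma R_forest_arc_eq_segment:
  assumes RF: "R_forest X d" and xy: "x \<noteq> y" and A: "is_arc X d x y A"
  shows "A = {q\<in>X. metric_between d x q y}"
proof
  have em: "ext_metric X d" using RF by (rule R_forest_ext_metric)
  have x: "x \<in> X" and y: "y \<in> X" using is_arc_endpoints[OF A] by blast+
  note f = R_forest_arcD(1)[OF RF xy A]
  define L where "L = enn2real (d x y)"
  obtain \<phi> where bij: "bij_betw \<phi> {0..L} A"
    and isom: "\<forall>s\<in>{0..L}. \<forall>t\<in>{0..L}. d (\<phi> s) (\<phi> t) = ennreal \<bar>s - t\<bar>"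
    using R_forest_arcD(3)[OF RF xy A] unfolding isometric_to_interval_def L_def by blast
  have "d x y = ennreal L" using f by (simp add: L_def less_top)
  then show "A \<subseteq> {q\<in>X. metric_between d x q y}"
    using isometric_interval_subset_segment[OF bij isom is_arc_endpoints(1,2)[OF A]]
      is_arc_endpoints(3)[OF A] by (force simp: L_def)
  show "{q\<in>X. metric_between d x q y} \<subseteq> A"
  proof
    fix q assume "q \<in> {q\<in>X. metric_between d x q y}"
    then have q: "q \<in> X" and b: "metric_between d x q y" by auto
    obtain \<phi>1 where g1: "geodesic X d x q \<phi>1"
      using R_forest_geodesic[OF RF x q metric_between_finite(1)[OF b]] .
    obtain \<phi>2 where g2: "geodesic X d q y \<phi>2"
      using R_forest_geodesic[OF RF q y metric_between_finite(2)[OF b]] .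
    let ?\<psi> = "join_paths \<phi>1 (enn2real (d x q)) \<phi>2"
    have "geodesic X d x y ?\<psi>" by (rule geodesic_join[OF em g1 g2 b])
    then have "?\<psi> ` {0..L} = A"
      using R_forest_arcD(2)[OF RF xy A] geodesic_is_arc[OF em _ xy] by (simp add: L_def)
    moreover have "?\<psi> (enn2real (d x q)) = q" using geodesicD(3)[OF g1]
      by (simp add: join_paths_def)
    moreover have "enn2real (d x q) \<in> {0..L}"
    proof -
      have "d x q \<le> d x q + d q y" by simp
      also have "\<dots> = d x y" using b by (simp add: metric_between_def)
      finally show ?thesis using f by (simp add: L_def enn2real_mono)
    qed
    ultimately show "q \<in> A" by (metis imageI)
  qed
qed

lemma R_forestI:
  assumes em: "ext_metric X d" and c: "ext_complete X d"
    and geo: "\<And>x y. x \<in> X \<Longrightarrow> y \<in> X \<Longrightarrow> d x y < \<infinity> \<Longrightarrow> \<exists>\<phi>. geodesic X d x y \<phi>"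
    and seg: "\<And>x y A. x \<noteq> y \<Longrightarrow> is_arc X d x y A \<Longrightarrow> A = {q\<in>X. metric_between d x q y}"
  shows "R_forest X d"
  unfolding R_forest_def
proof (intro conjI ballI em c)
  fix x assume x: "x \<in> X"
  define T where "T = {y\<in>X. d x y < \<infinity>}"
  have TX: "T \<subseteq> X" by (auto simp: T_def)
  have fin: "d y z < \<infinity>" if "y \<in> T" "z \<in> T" for y z
  proof -
    have "d y x < \<infinity>" using that(1) ext_metric_sym[OF em x, of y] by (simp add: T_def)
    then show ?thesis using ext_metric_finite_trans[OF em, of y x z] that x by (simp add: T_def)
  qed
  have arcs: "(\<exists>!A. is_arc T d y z A) \<and>
      (\<forall>A. is_arc T d y z A \<longrightarrow> isometric_to_interval d A (enn2real (d y z)))"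
    if y: "y \<in> T" and z: "z \<in> T" and yz: "y \<noteq> z" for y z
  proof -
    have yX: "y \<in> X" "z \<in> X" using y z TX by auto
    obtain \<phi> where g: "geodesic X d y z \<phi>" using geo[OF yX fin[OF y z]] by blast
    define Aa where "Aa = \<phi> ` {0..enn2real (d y z)}"
    have "Aa \<subseteq> T"
    proof
      fix w assume "w \<in> Aa"
      then obtain t where t: "t \<in> {0..enn2real (d y z)}" "w = \<phi> t" by (auto simp: Aa_def)
      have "d y w < \<infinity>" using geodesic_dist(1)[OF g t(1)] t(2) by simp
      moreover have "w \<in> X" using geodesicD(4)[OF g t(1)] t(2) by simp
      moreover have "d x y < \<infinity>" using y by (simp add: T_def)
      ultimately show "w \<in> T" using ext_metric_finite_trans[OF em x yX(1)] by (simp add: T_def)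
    qed
    then have arcT: "is_arc T d y z Aa"
      using is_arc_restrict[OF geodesic_is_arc[OF em g yz]] by (simp add: Aa_def)
    have segment: "B = {q\<in>X. metric_between d y q z}" if "is_arc T d y z B" for B
    proof -
      have "B \<subseteq> X" using is_arc_endpoints(3)[OF that] TX by blast
      then show ?thesis using seg[OF yz is_arc_restrict[OF that]] by blast
    qed
    have uniq: "B = Aa" if "is_arc T d y z B" for B
      using segment[OF that] segment[OF arcT] by simp
    have "isometric_to_interval d Aa (enn2real (d y z))"
      unfolding isometric_to_interval_def bij_betw_def Aa_def
      using geodesic_inj[OF em g] geodesicD(5)[OF g] by blast
    then show ?thesis using arcT uniq by blast
  qed
  have "R_tree T d"
    unfolding R_tree_def
  proof (intro conjI ballI impI)
    show "ext_metric T d" using ext_metric_subset[OF em TX] .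
    show "ext_complete T d" unfolding T_def using ext_complete_component[OF em c x] .
  qed (use fin arcs in simp_all)
  then show "R_tree {y\<in>X. d x y < \<infinity>} d" by (simp add: T_def)
qed

subsection \<open>Gates onto closed convex subsets\<close>

definition ext_closed :: "'a set \<Rightarrow> ('a \<Rightarrow> 'a \<Rightarrow> ennreal) \<Rightarrow> 'a set \<Rightarrow> bool" where
  "ext_closed X d S \<longleftrightarrow> S \<subseteq> X \<and> (\<forall>y\<in>X. (\<forall>e::real. e > 0 \<longrightarrow> (\<exists>s\<in>S. d s y < ennreal e)) \<longrightarrow> y \<in> S)"

definition ext_convex :: "'a set \<Rightarrow> ('a \<Rightarrow> 'a \<Rightarrow> ennreal) \<Rightarrow> 'a set \<Rightarrow> bool" where
  "ext_convex X d S \<longleftrightarrow> S \<subseteq> X \<and> (\<forall>s1\<in>S. \<forall>s2\<in>S. \<forall>q\<in>X. metric_between d s1 q s2 \<longrightarrow> q \<in> S)"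

definition gate :: "('a \<Rightarrow> 'a \<Rightarrow> ennreal) \<Rightarrow> 'a set \<Rightarrow> 'a \<Rightarrow> 'a \<Rightarrow> bool" where
  "gate d S y p \<longleftrightarrow> p \<in> S \<and> (\<forall>s\<in>S. d s y = d s p + d p y)"

lemma ext_convexD:
  "ext_convex X d S \<Longrightarrow> s1 \<in> S \<Longrightarrow> s2 \<in> S \<Longrightarrow> q \<in> X \<Longrightarrow> metric_between d s1 q s2 \<Longrightarrow> q \<in> S"
  unfolding ext_convex_def by blast

lemma segment_order:
  assumes RF: "R_forest X d" and X: "u \<in> X" "v \<in> X" "a \<in> X" "q \<in> X"
    and ba: "metric_between d u a v" and bq: "metric_between d u q v"
  shows "d u q \<le> d u a \<Longrightarrow> metric_between d u q a"
    and "d u a \<le> d u q \<Longrightarrow> metric_between d a q v"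
proof -
  have em: "ext_metric X d" using RF by (rule R_forest_ext_metric)
  have "(d u q \<le> d u a \<longrightarrow> metric_between d u q a) \<and> (d u a \<le> d u q \<longrightarrow> metric_between d a q v)"
  proof (cases "u = v")
    case True
    then have "a = u" "q = u" using metric_between_self[OF em X(1)] X ba bq by auto
    then show ?thesis using ext_metric_zero[OF em X(1)] True by (simp add: metric_between_def)
  next
    case False
    obtain \<phi> where g: "geodesic X d u v \<phi>"
      using R_forest_geodesic[OF RF X(1,2) metric_between_finite(3)[OF ba]] .
    define L where "L = enn2real (d u v)"
    have img: "\<phi> ` {0..L} = {q\<in>X. metric_between d u q v}"
      using R_forest_arc_eq_segment[OF RF False geodesic_is_arc[OF em g False]] by (simp add: L_def)
    obtain ta where ta: "ta \<in> {0..L}" "\<phi> ta = a" using img X(3) ba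
      by (metis (mono_tags, lifting) imageE mem_Collect_eq)
    obtain tq where tq: "tq \<in> {0..L}" "\<phi> tq = q" using img X(4) bq
      by (metis (mono_tags, lifting) imageE mem_Collect_eq)
    have dua: "d u a = ennreal ta" "d a v = ennreal (L - ta)" using geodesic_dist[OF g, of ta] ta
      by (auto simp: L_def)
    have duq: "d u q = ennreal tq" "d q v = ennreal (L - tq)" using geodesic_dist[OF g, of tq] tq
      by (auto simp: L_def)
    have daq: "d a q = ennreal \<bar>ta - tq\<bar>" using geodesicD(5)[OF g, of ta tq] ta tq
      by (auto simp: L_def)
    have dqa: "d q a = ennreal \<bar>tq - ta\<bar>" using geodesicD(5)[OF g, of tq ta] ta tq
      by (auto simp: L_def)
    show ?thesis
    proof (intro conjI impI)
      assume "d u q \<le> d u a"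
      then have le: "tq \<le> ta" using dua duq ta tq by simp
      have "d u q + d q a = ennreal (tq + (ta - tq))" using duq dqa le tq ta
        by (simp flip: ennreal_plus)
      then show "metric_between d u q a" unfolding metric_between_def using dua by simp
    next
      assume "d u a \<le> d u q"
      then have le: "ta \<le> tq" using dua duq ta tq by simp
      have "d a q + d q v = ennreal ((tq - ta) + (L - tq))" using daq duq le tq ta
        by (simp flip: ennreal_plus)
      then show "metric_between d a q v" unfolding metric_between_def using dua by simp
    qed
  qed
  then show "d u q \<le> d u a \<Longrightarrow> metric_between d u q a" and "d u a \<le> d u q \<Longrightarrow> metric_between d a q v"
    by blast+
qed

lemma geodesic_first_point_in_closed:
  assumes cl: "ext_closed X d S" and g: "geodesic X d y s0 \<phi>" and s0: "s0 \<in> S"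
  obtains ts where "ts \<in> {0..enn2real (d y s0)}" "\<phi> ts \<in> S" "\<And>t. 0 \<le> t \<Longrightarrow> t < ts \<Longrightarrow> \<phi> t \<notin> S"
proof -
  define L where "L = enn2real (d y s0)"
  define TS where "TS = {t\<in>{0..L}. \<phi> t \<in> S}"
  have LTS: "L \<in> TS" using geodesicD(3)[OF g] s0 by (simp add: TS_def L_def)
  have bdd: "bdd_below TS" unfolding bdd_below_def TS_def by auto
  define ts where "ts = Inf TS"
  have ts_le: "\<And>t. t \<in> TS \<Longrightarrow> ts \<le> t" unfolding ts_def using bdd by (simp add: cInf_lower)
  have ts0: "0 \<le> ts" unfolding ts_def using LTS by (intro cInf_greatest) (auto simp: TS_def)
  have tsI: "ts \<in> {0..L}" using ts0 ts_le[OF LTS] by simp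
  have "\<phi> ts \<in> S"
  proof -
    have "\<exists>s\<in>S. d s (\<phi> ts) < ennreal e" if e: "e > 0" for e :: real
    proof -
      have "Inf TS < ts + e" using e by (simp add: ts_def)
      then obtain t where t: "t \<in> TS" "t < ts + e" using cInf_less_iff[of TS] LTS bdd by blast
      have tI: "t \<in> {0..L}" using t(1) by (simp add: TS_def)
      have "d (\<phi> t) (\<phi> ts) = ennreal \<bar>t - ts\<bar>" using geodesicD(5)[OF g] tI tsI by (simp add: L_def)
      also have "\<dots> < ennreal e" using t ts_le[OF t(1)] e by (simp add: ennreal_lessI)
      finally show ?thesis using t(1) by (auto simp: TS_def)
    qed
    moreover have "\<phi> ts \<in> X" using geodesicD(4)[OF g] tsI by (simp add: L_def)
    ultimately show ?thesis using cl by (simp add: ext_closed_def)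
  qed
  moreover have "\<phi> t \<notin> S" if "0 \<le> t" "t < ts" for t
    using ts_le[of t] that ts_le[OF LTS] by (auto simp: TS_def)
  ultimately show ?thesis using that tsI by (simp add: L_def)
qed

text \<open>A geodesic from s to p and the part of the geodesic from y that precedes p meet only at p, by
  convexity of S; so together they form an arc, which is the segment from s to y.\<close>

lemma R_forest_first_point_between:
  assumes RF: "R_forest X d" and cv: "ext_convex X d S" and g: "geodesic X d y p \<phi>" and pS: "p \<in> S"
    and before: "\<And>t. 0 \<le> t \<Longrightarrow> t < enn2real (d y p) \<Longrightarrow> \<phi> t \<notin> S"
    and sS: "s \<in> S" and sy: "s \<noteq> y" and fin: "d s p < \<infinity>"
  shows "metric_between d s p y"
proof -
  have em: "ext_metric X d" using RF by (rule R_forest_ext_metric)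
  have yX: "y \<in> X" using geodesicD(4)[OF g, of 0] geodesicD(2)[OF g] by simp
  have pX: "p \<in> X" using geodesicD(4)[OF g, of "enn2real (d y p)"] geodesicD(3)[OF g] by simp
  have sX: "s \<in> X" using sS cv by (auto simp: ext_convex_def)
  define L where "L = enn2real (d y p)"
  have L: "enn2real (d p y) = L" using ext_metric_sym[OF em yX pX] by (simp add: L_def)
  obtain \<psi> where g1: "geodesic X d s p \<psi>" using R_forest_geodesic[OF RF sX pX fin] .
  define \<rho> where "\<rho> = (\<lambda>t. \<phi> (L - t))"
  have g2: "geodesic X d p y \<rho>" using geodesic_reverse[OF em g yX pX] by (simp add: \<rho>_def L_def)
  have "\<psi> a = p"
    if a: "a \<in> {0..enn2real (d s p)}" and b: "b \<in> {0..enn2real (d p y)}" and e: "\<psi> a = \<rho> b"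
    for a b
  proof -
    have "\<psi> a \<in> S" using ext_convexD[OF cv sS pS geodesicD(4)[OF g1 a] geodesic_between[OF g1 a]] .
    then have "\<not> L - b < L" using before[of "L - b"] e b L by (auto simp: \<rho>_def L_def)
    then show ?thesis using e b L geodesicD(3)[OF g] by (simp add: \<rho>_def L_def)
  qed
  then have "is_arc X d s y (\<psi> ` {0..enn2real (d s p)} \<union> \<rho> ` {0..enn2real (d p y)})"
    using is_arc_join[OF em g1 g2 sy] by blast
  then have "\<psi> ` {0..enn2real (d s p)} \<subseteq> {q\<in>X. metric_between d s q y}"
    using R_forest_arc_eq_segment[OF RF sy] by blast
  moreover have "enn2real (d s p) \<in> {0..enn2real (d s p)}" by simp
  then have "p \<in> \<psi> ` {0..enn2real (d s p)}" using geodesicD(3)[OF g1] by (metis imageI)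
  ultimately show ?thesis by blast
qed

lemma R_forest_gate_exists:
  assumes RF: "R_forest X d" and cl: "ext_closed X d S" and cv: "ext_convex X d S" and y: "y \<in> X"
    and s0: "s0 \<in> S" and f: "d s0 y < \<infinity>"
  obtains p where "gate d S y p"
proof -
  have em: "ext_metric X d" using RF by (rule R_forest_ext_metric)
  have SX: "S \<subseteq> X" using cl by (simp add: ext_closed_def)
  have s0X: "s0 \<in> X" using s0 SX by blast
  have "d y s0 < \<infinity>" using f ext_metric_sym[OF em y s0X] by simp
  then obtain \<phi> where g: "geodesic X d y s0 \<phi>" using R_forest_geodesic[OF RF y s0X] by blast
  obtain ts where tsI: "ts \<in> {0..enn2real (d y s0)}" and pS: "\<phi> ts \<in> S"
    and before: "\<And>t. 0 \<le> t \<Longrightarrow> t < ts \<Longrightarrow> \<phi> t \<notin> S"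
    using geodesic_first_point_in_closed[OF cl g s0] by blast
  define p where "p = \<phi> ts"
  have pX: "p \<in> X" using geodesicD(4)[OF g tsI] by (simp add: p_def)
  have gp: "geodesic X d y p \<phi>" using geodesic_initial[OF g tsI] by (simp add: p_def)
  have dyp: "d y p = ennreal ts" using geodesic_dist(1)[OF g tsI] by (simp add: p_def)
  have "d s y = d s p + d p y" if sS: "s \<in> S" for s
  proof -
    have sX: "s \<in> X" using sS SX by blast
    consider "d s y = \<infinity>" | "s = y" | "d s y < \<infinity>" "s \<noteq> y"
      unfolding infinity_ennreal_def using less_top[of "d s y"] by blast
    then show ?thesis
    proof cases
      case 1
      have "d s y \<le> d s p + d p y" using ext_metric_triangle[OF em sX pX y] .
      then show ?thesis using 1 by (auto simp: top_unique)
    next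
      case 2
      then have "\<not> 0 < ts" using before[of 0] geodesicD(2)[OF g] sS by auto
      then have "p = y" using geodesicD(2)[OF g] tsI by (simp add: p_def)
      then show ?thesis using 2 ext_metric_zero[OF em y] by simp
    next
      case 3
      have "d s p \<le> d s y + d y p" using ext_metric_triangle[OF em sX y pX] .
      also have "\<dots> < \<infinity>" using 3(1) dyp by simp
      finally have "d s p < \<infinity>" .
      moreover have "\<And>t. 0 \<le> t \<Longrightarrow> t < enn2real (d y p) \<Longrightarrow> \<phi> t \<notin> S"
        using before dyp tsI by simp
      ultimately show ?thesis
        using R_forest_first_point_between[OF RF cv gp pS[folded p_def] _ sS 3(2)]
        by (simp add: metric_between_def)
    qed
  qed
  then show ?thesis using that pS unfolding gate_def p_def by blast
qed

lemma ext_cauchy_if_converges: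
  assumes em: "ext_metric X d" and y: "y \<in> X" and aX: "\<And>n. a n \<in> X"
    and conv: "\<And>e::real. e > 0 \<Longrightarrow> \<exists>N. \<forall>n\<ge>N. d (a n) y < ennreal e"
  shows "ext_cauchy d a"
  unfolding ext_cauchy_def
proof (intro allI impI)
  fix e :: real assume e: "e > 0"
  obtain N where N: "\<forall>n\<ge>N. d (a n) y < ennreal (e/2)" using conv[of "e/2"] e by auto
  have "d (a m) (a n) < ennreal e" if "m \<ge> N" "n \<ge> N" for m n
  proof -
    have "d (a m) (a n) \<le> d (a m) y + d (a n) y"
      using ext_metric_triangle[OF em aX y aX] ext_metric_sym[OF em y aX] by simp
    also have "\<dots> < ennreal (e/2 + e/2)" by (rule ennreal_add_less) (use N that e in auto)
    finally show ?thesis by simp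
  qed
  then show "\<exists>N. \<forall>m\<ge>N. \<forall>n\<ge>N. d (a m) (a n) < ennreal e" by blast
qed

lemma ext_limit_unique:
  fixes a :: "nat \<Rightarrow> 'a"
  assumes em: "ext_metric X d" and y: "y \<in> X" and z: "z \<in> X" and aX: "\<And>n. a n \<in> X"
    and y_lim: "\<And>e::real. e > 0 \<Longrightarrow> \<exists>N. \<forall>n\<ge>N. d (a n) y < ennreal e"
    and z_lim: "\<And>e::real. e > 0 \<Longrightarrow> \<exists>N. \<forall>n\<ge>N. d (a n) z < ennreal e"
  shows "y = z"
proof -
  have "d y z = 0"
  proof (rule ennreal_eps_imp_0)
    fix e :: real assume e: "e > 0"
    obtain N1 where N1: "\<forall>n\<ge>N1. d (a n) y < ennreal (e/2)" using y_lim[of "e/2"] e by auto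
    obtain N2 where N2: "\<forall>n\<ge>N2. d (a n) z < ennreal (e/2)" using z_lim[of "e/2"] e by auto
    define n where "n = max N1 N2"
    have n: "n \<ge> N1" "n \<ge> N2" by (simp_all add: n_def)
    have "d y z \<le> d (a n) y + d (a n) z"
      using ext_metric_triangle[OF em y aX z] ext_metric_sym[OF em y aX] by simp
    also have "\<dots> < ennreal (e/2 + e/2)" by (rule ennreal_add_less) (use N1 N2 n e in auto)
    finally show "d y z < ennreal e" by simp
  qed
  then show ?thesis using ext_metric_eq_0_iff[OF em y z] by simp
qed

lemma ext_complete_imp_closed:
  assumes em: "ext_metric X d" and YX: "Y \<subseteq> X" and cY: "ext_complete Y d"
  shows "ext_closed X d Y"
  unfolding ext_closed_def
proof (intro conjI ballI impI YX)
  fix y assume y: "y \<in> X" and H: "\<forall>\<epsilon>::real. \<epsilon> > 0 \<longrightarrow> (\<exists>s\<in>Y. d s y < ennreal \<epsilon>)"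
  have "\<forall>n. \<exists>a. a \<in> Y \<and> d a y < ennreal (inverse (real (Suc n)))"
  proof
    fix n
    have "inverse (real (Suc n)) > 0" by simp
    then show "\<exists>a. a \<in> Y \<and> d a y < ennreal (inverse (real (Suc n)))" using H by blast
  qed
  then obtain a where "\<forall>n. a n \<in> Y \<and> d (a n) y < ennreal (inverse (real (Suc n)))"
    by (metis choice)
  then have aY: "\<And>n. a n \<in> Y" and ad: "\<And>n. d (a n) y < ennreal (inverse (real (Suc n)))"
    by blast+
  have aX: "\<And>n. a n \<in> X" using aY YX by blast
  have close: "\<exists>N. \<forall>n\<ge>N. d (a n) y < ennreal \<epsilon>" if \<epsilon>: "\<epsilon> > 0" for \<epsilon>
  proof -
    obtain N where N: "inverse (real (Suc N)) < \<epsilon>" using reals_Archimedean[OF \<epsilon>] by blast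
    have "d (a n) y < ennreal \<epsilon>" if "n \<ge> N" for n
    proof -
      have "inverse (real (Suc n)) \<le> inverse (real (Suc N))" using that
        by (simp add: le_imp_inverse_le)
      then have "ennreal (inverse (real (Suc n))) \<le> ennreal \<epsilon>" using N
        by (intro ennreal_leI) linarith
      then show ?thesis using ad[of n] by (rule order.strict_trans2[rotated])
    qed
    then show ?thesis by blast
  qed
  have "ext_cauchy d a" by (rule ext_cauchy_if_converges[OF em y aX close])
  then obtain z where z: "z \<in> Y" and conv: "\<forall>\<epsilon>::real. \<epsilon> > 0 \<longrightarrow> (\<exists>N. \<forall>n\<ge>N. d (a n) z < ennreal \<epsilon>)"
    using cY aY unfolding ext_complete_def ext_converges_in_def by blast
  have "y = z" using ext_limit_unique[OF em y _ aX close] z conv YX by blast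
  then show "y \<in> Y" using z by simp
qed

lemma ext_cauchy_frequently_in_complete_converges:
  assumes em: "ext_metric X d" and YX: "Y \<subseteq> X" and cY: "ext_complete Y d"
    and sX: "\<And>n. s n \<in> X" and cau: "ext_cauchy d s" and freq: "\<And>N. \<exists>n\<ge>N. s n \<in> Y"
  shows "ext_converges_in X d s"
proof -
  define r where "r k = (LEAST n. k \<le> n \<and> s n \<in> Y)" for k
  have r: "k \<le> r k" "s (r k) \<in> Y" for k
    using LeastI_ex[OF freq[of k]] unfolding r_def by blast+
  have cau': "\<exists>N. \<forall>m\<ge>N. \<forall>n\<ge>N. d (s m) (s n) < ennreal e" if "e > 0" for e
    using cau that unfolding ext_cauchy_def by blast
  have "ext_cauchy d (\<lambda>k. s (r k))"
    unfolding ext_cauchy_def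
  proof (intro allI impI)
    fix e :: real assume "e > 0"
    then obtain N where "\<forall>m\<ge>N. \<forall>n\<ge>N. d (s m) (s n) < ennreal e" using cau' by blast
    then show "\<exists>N. \<forall>m\<ge>N. \<forall>n\<ge>N. d (s (r m)) (s (r n)) < ennreal e"
      using r(1) order_trans by blast
  qed
  then have "ext_converges_in Y d (\<lambda>k. s (r k))"
    using cY[unfolded ext_complete_def, rule_format, of "\<lambda>k. s (r k)"] r(2) by blast
  then obtain z where z: "z \<in> Y" "\<forall>e::real. e > 0 \<longrightarrow> (\<exists>N. \<forall>k\<ge>N. d (s (r k)) z < ennreal e)"
    unfolding ext_converges_in_def by blast
  have zX: "z \<in> X" using z(1) YX by blast
  have "\<exists>N. \<forall>n\<ge>N. d (s n) z < ennreal e" if e: "e > 0" for e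
  proof -
    obtain N1 where N1: "\<forall>m\<ge>N1. \<forall>n\<ge>N1. d (s m) (s n) < ennreal (e/2)" using cau' e
      by (meson half_gt_zero)
    obtain N2 where N2: "\<forall>k\<ge>N2. d (s (r k)) z < ennreal (e/2)" using z(2) e by (meson half_gt_zero)
    have "d (s n) z < ennreal e" if n: "n \<ge> max N1 N2" for n
    proof -
      have "d (s n) z \<le> d (s n) (s (r n)) + d (s (r n)) z"
        using ext_metric_triangle[OF em sX sX zX] .
      also have "\<dots> < ennreal (e/2 + e/2)"
        by (rule ennreal_add_less) (use N1 N2 n r(1)[of n] e in auto)
      finally show ?thesis by simp
    qed
    then show ?thesis by blast
  qed
  then show ?thesis unfolding ext_converges_in_def using zX by blast
qed

subsection \<open>Isometric embeddings\<close>

lemma iso_embD: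
  assumes "iso_emb X dX Y dY f"
  shows "x \<in> X \<Longrightarrow> f x \<in> Y" and "x \<in> X \<Longrightarrow> y \<in> X \<Longrightarrow> dY (f x) (f y) = dX x y"
  using assms unfolding iso_emb_def by auto

lemma iso_emb_inj:
  assumes "iso_emb X dX Y dY f" "ext_metric X dX"
  shows "inj_on f X"
proof (rule inj_onI)
  fix x y assume x: "x \<in> X" and y: "y \<in> X" and e: "f x = f y"
  have "dX x y = dX x x" using iso_embD(2)[OF assms(1) x y] iso_embD(2)[OF assms(1) x x] e by simp
  then show "x = y" using ext_metric_zero[OF assms(2) x] ext_metric_eq_0_iff[OF assms(2) x y]
    by simp
qed

lemma iso_emb_inv_into:
  assumes e: "iso_emb X dX Y dY f" and em: "ext_metric X dX"
  shows "iso_emb (f ` X) dY X dX (inv_into X f)"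
  unfolding iso_emb_def
proof (intro conjI ballI subsetI)
  fix w assume "w \<in> inv_into X f ` f ` X"
  then obtain u where "u \<in> f ` X" "w = inv_into X f u" by blast
  then show "w \<in> X" by (simp add: inv_into_into)
next
  fix u v assume "u \<in> f ` X" "v \<in> f ` X"
  then obtain a b where ab: "a \<in> X" "b \<in> X" "u = f a" "v = f b" by blast
  have "inv_into X f u = a" "inv_into X f v = b"
    using inv_into_f_f[OF iso_emb_inj[OF e em]] ab by simp_all
  then show "dX (inv_into X f u) (inv_into X f v) = dY u v" using iso_embD(2)[OF e ab(1,2)] ab(3,4)
    by simp
qed

lemma ext_metric_iso_emb_image:
  assumes e: "iso_emb X dX Y dY f" and em: "ext_metric X dX"
  shows "ext_metric (f ` X) dY"
  unfolding ext_metric_def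
proof (intro conjI ballI)
  fix u v w assume "u \<in> f ` X" "v \<in> f ` X" "w \<in> f ` X"
  then obtain a b c where abc: "a \<in> X" "b \<in> X" "c \<in> X" "u = f a" "v = f b" "w = f c" by blast
  have "dY u v = 0 \<longleftrightarrow> a = b"
    using iso_embD(2)[OF e abc(1,2)] ext_metric_eq_0_iff[OF em abc(1,2)] abc(4,5) by simp
  also have "\<dots> \<longleftrightarrow> u = v" using inj_on_eq_iff[OF iso_emb_inj[OF e em] abc(1,2)] abc(4,5) by simp
  finally show "dY u v = 0 \<longleftrightarrow> u = v" .
  show "dY u v = dY v u"
    using iso_embD(2)[OF e abc(1,2)] iso_embD(2)[OF e abc(2,1)] ext_metric_sym[OF em abc(1,2)]
      abc(4,5) by simp
  show "dY u w \<le> dY u v + dY v w"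
    using iso_embD(2)[OF e abc(1,3)] iso_embD(2)[OF e abc(1,2)] iso_embD(2)[OF e abc(2,3)]
      ext_metric_triangle[OF em abc(1-3)] abc(4-6) by simp
qed

lemma geodesic_iso_emb:
  assumes g: "geodesic X dX x y \<phi>" and e: "iso_emb X dX Y dY f" and x: "x \<in> X" and y: "y \<in> X"
  shows "geodesic (f ` X) dY (f x) (f y) (f \<circ> \<phi>)"
  unfolding geodesic_def iso_embD(2)[OF e x y] o_def
proof (intro conjI ballI)
  show "dX x y < \<infinity>" "f (\<phi> 0) = f x" "f (\<phi> (enn2real (dX x y))) = f y"
    using geodesicD(1-3)[OF g] by simp_all
  fix s t assume s: "s \<in> {0..enn2real (dX x y)}" and t: "t \<in> {0..enn2real (dX x y)}"
  show "f (\<phi> s) \<in> f ` X" using geodesicD(4)[OF g s] by blast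
  show "dY (f (\<phi> s)) (f (\<phi> t)) = ennreal \<bar>s - t\<bar>"
    using iso_embD(2)[OF e geodesicD(4)[OF g s] geodesicD(4)[OF g t]] geodesicD(5)[OF g s t] by simp
qed

lemma is_arc_iso_emb:
  assumes A: "is_arc X dX x y A" and e: "iso_emb X dX Y dY f" and em: "ext_metric X dX"
  shows "is_arc (f ` X) dY (f x) (f y) (f ` A)"
proof -
  obtain \<gamma> :: "real \<Rightarrow> 'a" where g: "\<gamma> ` {0..1} = A" "A \<subseteq> X" "inj_on \<gamma> {0..1}" "\<gamma> 0 = x"
    "\<gamma> 1 = y" "ext_continuous_on {0..1} dX \<gamma>"
    using is_arcE[OF A] by metis
  have gX: "\<gamma> t \<in> X" if "t \<in> {0..1}" for t using g(1,2) that by blast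
  show ?thesis
  proof (rule is_arcI[of "f \<circ> \<gamma>"])
    show "(f \<circ> \<gamma>) ` {0..1} = f ` A" using g(1) image_comp by metis
    show "f ` A \<subseteq> f ` X" using g(2) by blast
    have "\<gamma> ` {0..1} \<subseteq> X" using g(1,2) by simp
    then show "inj_on (f \<circ> \<gamma>) {0..1}"
      using comp_inj_on[OF g(3) inj_on_subset[OF iso_emb_inj[OF e em]]] by blast
    show "(f \<circ> \<gamma>) 0 = f x" "(f \<circ> \<gamma>) 1 = f y" using g(4,5) by simp_all
    have "dY ((f \<circ> \<gamma>) s) ((f \<circ> \<gamma>) t) = dX (\<gamma> s) (\<gamma> t)" if "s \<in> {0..1}" "t \<in> {0..1}" for s t
      using iso_embD(2)[OF e gX[OF that(1)] gX[OF that(2)]] by simp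
    then show "ext_continuous_on {0..1} dY (f \<circ> \<gamma>)"
      using g(6) unfolding ext_continuous_on_def by metis
  qed
qed

lemma ext_complete_iso_emb_image:
  assumes e: "iso_emb X dX Y dY f" and em: "ext_metric X dX" and c: "ext_complete X dX"
  shows "ext_complete (f ` X) dY"
  unfolding ext_complete_def
proof (intro allI impI)
  define g where "g = inv_into X f"
  have ge: "iso_emb (f ` X) dY X dX g" unfolding g_def by (rule iso_emb_inv_into[OF e em])
  have fg: "f (g u) = u" if "u \<in> f ` X" for u using that by (simp add: g_def f_inv_into_f)
  fix s assume h: "(\<forall>n. s n \<in> f ` X) \<and> ext_cauchy dY s"
  then have sX: "\<And>n. s n \<in> f ` X" by blast
  have "ext_cauchy dX (\<lambda>n. g (s n))"
    using h iso_embD(2)[OF ge sX sX] unfolding ext_cauchy_def by simp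
  moreover have "\<forall>n. g (s n) \<in> X" using iso_embD(1)[OF ge sX] by blast
  ultimately have "ext_converges_in X dX (\<lambda>n. g (s n))"
    using c[unfolded ext_complete_def, rule_format, of "\<lambda>n. g (s n)"] by blast
  then obtain x0 where x0: "x0 \<in> X" "\<forall>e::real. e > 0 \<longrightarrow> (\<exists>N. \<forall>n\<ge>N. dX (g (s n)) x0 < ennreal e)"
    unfolding ext_converges_in_def by blast
  have "dY (s n) (f x0) = dX (g (s n)) x0" for n
    using iso_embD(2)[OF e iso_embD(1)[OF ge sX] x0(1)] fg[OF sX] by simp
  then have "\<forall>e::real. e > 0 \<longrightarrow> (\<exists>N. \<forall>n\<ge>N. dY (s n) (f x0) < ennreal e)" using x0(2) by simp
  then show "ext_converges_in (f ` X) dY s"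
    unfolding ext_converges_in_def using x0(1) by blast
qed

lemma R_forest_iso_emb_image:
  assumes RX: "R_forest X dX" and e: "iso_emb X dX Y dY f"
  shows "R_forest (f ` X) dY"
proof -
  have emX: "ext_metric X dX" using RX by (rule R_forest_ext_metric)
  have em: "ext_metric (f ` X) dY" by (rule ext_metric_iso_emb_image[OF e emX])
  define g where "g = inv_into X f"
  have ge: "iso_emb (f ` X) dY X dX g" unfolding g_def by (rule iso_emb_inv_into[OF e emX])
  have gf: "g (f x) = x" if "x \<in> X" for x using inv_into_f_f[OF iso_emb_inj[OF e emX] that]
    by (simp add: g_def)
  have fg: "f (g u) = u" if "u \<in> f ` X" for u using that by (simp add: g_def f_inv_into_f)
  show ?thesis
  proof (rule R_forestI[OF em ext_complete_iso_emb_image[OF e emX R_forest_ext_complete[OF RX]]])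
    fix u v assume "u \<in> f ` X" "v \<in> f ` X" "dY u v < \<infinity>"
    then obtain x y where xy: "x \<in> X" "y \<in> X" "u = f x" "v = f y" "dX x y < \<infinity>"
      using iso_embD(2)[OF e] by auto
    obtain \<phi> where "geodesic X dX x y \<phi>" using R_forest_geodesic[OF RX xy(1,2,5)] .
    then show "\<exists>\<phi>. geodesic (f ` X) dY u v \<phi>" using geodesic_iso_emb[OF _ e xy(1,2)] xy(3,4)
      by blast
  next
    fix u v B assume uv: "u \<noteq> v" and B: "is_arc (f ` X) dY u v B"
    obtain x y where x: "x \<in> X" "u = f x" and y: "y \<in> X" "v = f y"
      using is_arc_endpoints[OF B] by blast
    have "is_arc (g ` f ` X) dX (g u) (g v) (g ` B)" by (rule is_arc_iso_emb[OF B ge em])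
    moreover have "g ` f ` X = X" using gf by force
    moreover have "g u = x" "g v = y" using gf x y by simp_all
    ultimately have "is_arc X dX x y (g ` B)" by simp
    moreover have "x \<noteq> y" using uv x y by blast
    ultimately have seg: "g ` B = {q\<in>X. metric_between dX x q y}"
      using R_forest_arc_eq_segment[OF RX] by blast
    have "B = f ` g ` B" using fg is_arc_endpoints(3)[OF B] by (force simp: image_comp)
    also have "\<dots> = {w\<in>f ` X. metric_between dY u w v}"
    proof
      show "f ` g ` B \<subseteq> {w\<in>f ` X. metric_between dY u w v}"
        unfolding seg metric_between_def using iso_embD(2)[OF e] x y by auto
      show "{w\<in>f ` X. metric_between dY u w v} \<subseteq> f ` g ` B"
      proof
        fix w assume "w \<in> {w\<in>f ` X. metric_between dY u w v}"
        then obtain q where q: "q \<in> X" "w = f q" and b: "metric_between dY u w v" by blast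
        have "metric_between dX x q y"
          using b iso_embD(2)[OF e] x y q unfolding metric_between_def by simp
        then show "w \<in> f ` g ` B" unfolding seg using q by blast
      qed
    qed
    finally show "B = {w\<in>f ` X. metric_between dY u w v}" .
  qed
qed

lemma iso_emb_image_convex:
  assumes RA: "R_forest A dA" and RX: "R_forest X d" and e: "iso_emb A dA X d f"
  shows "ext_convex X d (f ` A)"
  unfolding ext_convex_def
proof (intro conjI ballI impI)
  have emX: "ext_metric X d" using RX by (rule R_forest_ext_metric)
  show fAX: "f ` A \<subseteq> X" using iso_embD(1)[OF e] by blast
  fix s1 s2 q assume s1: "s1 \<in> f ` A" and s2: "s2 \<in> f ` A" and q: "q \<in> X"
    and b: "metric_between d s1 q s2"
  obtain a1 a2 where a: "a1 \<in> A" "a2 \<in> A" "s1 = f a1" "s2 = f a2" using s1 s2 by blast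
  show "q \<in> f ` A"
  proof (cases "s1 = s2")
    case True
    then show ?thesis using metric_between_self[OF emX _ q] b s1 fAX by blast
  next
    case False
    have dd: "d s1 s2 = dA a1 a2" using iso_embD(2)[OF e a(1,2)] a(3,4) by simp
    obtain \<phi> where "geodesic A dA a1 a2 \<phi>"
      using R_forest_geodesic[OF RA a(1,2)] metric_between_finite(3)[OF b] dd by auto
    then have g: "geodesic (f ` A) d s1 s2 (f \<circ> \<phi>)" using geodesic_iso_emb[OF _ e a(1,2)] a(3,4)
      by simp
    then have "(f \<circ> \<phi>) ` {0..enn2real (d s1 s2)} = {q\<in>X. metric_between d s1 q s2}"
      using R_forest_arc_eq_segment[OF RX False]
        geodesic_is_arc[OF emX geodesic_mono[OF g fAX] False]
      by blast
    then have "q \<in> (f \<circ> \<phi>) ` {0..enn2real (d s1 s2)}" using q b by simp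
    then show ?thesis using geodesicD(4)[OF g] by blast
  qed
qed

lemma iso_emb_image_closed:
  assumes emA: "ext_metric A dA" and cA: "ext_complete A dA" and emX: "ext_metric X d"
    and e: "iso_emb A dA X d f"
  shows "ext_closed X d (f ` A)"
  using ext_complete_imp_closed[OF emX _ ext_complete_iso_emb_image[OF e emA cA]] iso_embD(1)[OF e]
  by blast

subsection \<open>Gluing two R-forests along a closed convex common part\<close>

locale forest_gluing =
  fixes D :: "'a set" and d :: "'a \<Rightarrow> 'a \<Rightarrow> ennreal" and P Q :: "'a set"
  assumes D_eq: "D = P \<union> Q"
    and R_forest_P: "R_forest P d" and R_forest_Q: "R_forest Q d"
    and sym_D: "\<And>x y. x \<in> D \<Longrightarrow> y \<in> D \<Longrightarrow> d x y = d y x"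
    and closed_P: "ext_closed P d (P \<inter> Q)" and closed_Q: "ext_closed Q d (P \<inter> Q)"
    and convex_P: "ext_convex P d (P \<inter> Q)" and convex_Q: "ext_convex Q d (P \<inter> Q)"
    and dist_PQ: "\<And>x y. x \<in> P \<Longrightarrow> y \<in> Q \<Longrightarrow> d x y = (INF s\<in>P \<inter> Q. d x s + d s y)"
begin

lemma swapped: "forest_gluing D d Q P"
proof
  show "D = Q \<union> P" using D_eq by blast
  show "R_forest Q d" using R_forest_Q .
  show "R_forest P d" using R_forest_P .
  show "\<And>x y. x \<in> D \<Longrightarrow> y \<in> D \<Longrightarrow> d x y = d y x" using sym_D .
  show "ext_closed Q d (Q \<inter> P)" "ext_closed P d (Q \<inter> P)" using closed_P closed_Q
    by (simp_all add: Int_commute)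
  show "ext_convex Q d (Q \<inter> P)" "ext_convex P d (Q \<inter> P)" using convex_P convex_Q
    by (simp_all add: Int_commute)
  fix x y assume x: "x \<in> Q" and y: "y \<in> P"
  have "d x y = d y x" using sym_D x y D_eq by blast
  also have "\<dots> = (INF s\<in>P \<inter> Q. d y s + d s x)" using dist_PQ[OF y x] .
  also have "\<dots> = (INF s\<in>Q \<inter> P. d x s + d s y)"
  proof (rule INF_cong)
    show "P \<inter> Q = Q \<inter> P" by blast
    fix s assume s: "s \<in> Q \<inter> P"
    have "d y s = d s y" "d s x = d x s" using sym_D s x y D_eq by blast+
    then show "d y s + d s x = d x s + d s y" by (simp add: add.commute)
  qed
  finally show "d x y = (INF s\<in>Q \<inter> P. d x s + d s y)" .
qed

lemma ext_metric_P: "ext_metric P d"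
  using R_forest_P by (rule R_forest_ext_metric)

lemma ext_metric_Q: "ext_metric Q d"
  using R_forest_Q by (rule R_forest_ext_metric)

lemma P_subset_D: "P \<subseteq> D" and Q_subset_D: "Q \<subseteq> D"
  using D_eq by auto

lemma gate_exists:
  assumes x: "x \<in> P" and y: "y \<in> Q" and f: "d x y < \<infinity>"
  obtains p where "gate d (P \<inter> Q) y p"
proof -
  have "(INF s\<in>P \<inter> Q. d x s + d s y) < \<infinity>" using f dist_PQ[OF x y] by simp
  then have "\<exists>s\<in>P \<inter> Q. d x s + d s y < \<infinity>" unfolding INF_less_iff .
  then obtain s where s: "s \<in> P \<inter> Q" "d x s + d s y < \<infinity>" by blast
  have f2: "d s y < \<infinity>" using s(2) by simp
  show ?thesis using R_forest_gate_exists[OF R_forest_Q closed_Q convex_Q y s(1) f2] that .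
qed

lemma gateD:
  assumes "gate d (P \<inter> Q) y p"
  shows "p \<in> P" "p \<in> Q" "\<And>s. s \<in> P \<inter> Q \<Longrightarrow> d s y = d s p + d p y"
proof -
  have h: "p \<in> P \<inter> Q" "\<forall>s\<in>P \<inter> Q. d s y = d s p + d p y" using assms unfolding gate_def by blast+
  then show "p \<in> P" "p \<in> Q" by blast+
  fix s assume "s \<in> P \<inter> Q" then show "d s y = d s p + d p y" using h(2) by blast
qed

lemma dist_through_gate:
  assumes x: "x \<in> P" and y: "y \<in> Q" and g: "gate d (P \<inter> Q) y p"
  shows "d x y = d x p + d p y"
proof -
  have pP: "p \<in> P" and pQ: "p \<in> Q" using gateD[OF g] by auto
  have "d x y = (INF s\<in>P \<inter> Q. d x s + d s y)" using dist_PQ[OF x y] .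
  also have "\<dots> = d x p + d p y"
  proof (rule antisym)
    show "(INF s\<in>P \<inter> Q. d x s + d s y) \<le> d x p + d p y"
      using INF_lower[of p "P \<inter> Q" "\<lambda>s. d x s + d s y"] pP pQ by simp
    show "d x p + d p y \<le> (INF s\<in>P \<inter> Q. d x s + d s y)"
    proof (rule INF_greatest)
      fix s assume s: "s \<in> P \<inter> Q"
      have "d x p \<le> d x s + d s p" using ext_metric_triangle[OF ext_metric_P x _ pP] s by blast
      then have "d x p + d p y \<le> d x s + d s p + d p y" by (rule add_right_mono)
      also have "\<dots> = d x s + d s y" using gateD(3)[OF g s] by (simp add: add.assoc)
      finally show "d x p + d p y \<le> d x s + d s y" .
    qed
  qed
  finally show ?thesis .
qed

lemma gate_dist_le:
  assumes x: "x \<in> P" and y: "y \<in> Q" and g: "gate d (P \<inter> Q) y p"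
  shows "d p y \<le> d x y"
  using dist_through_gate[OF assms] by (simp add: add_increasing)

lemma gate_dist_finite:
  assumes x: "x \<in> P" and y: "y \<in> Q" and g: "gate d (P \<inter> Q) y p" and f: "d x y < \<infinity>"
  shows "d x p < \<infinity>" "d p y < \<infinity>"
proof -
  have "d x p + d p y < \<infinity>" using dist_through_gate[OF x y g] f by simp
  then show "d x p < \<infinity>" "d p y < \<infinity>" by simp_all
qed

lemma P_closed_in_D:
  assumes z: "z \<in> D" and H: "\<forall>e::real. e > 0 \<longrightarrow> (\<exists>x\<in>P. d x z < ennreal e)"
  shows "z \<in> P"
proof (rule ccontr)
  assume zP: "z \<notin> P"
  then have zQ: "z \<in> Q" using z D_eq by blast
  obtain x where x: "x \<in> P" "d x z < ennreal 1" using H by (meson zero_less_one)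
  have "d x z < \<infinity>" using order.strict_trans[OF x(2) ennreal_less_top] by simp
  then obtain p where g: "gate d (P \<inter> Q) z p" using gate_exists[OF x(1) zQ] by blast
  have "d p z = 0"
  proof (rule ennreal_eps_imp_0)
    fix e :: real assume "e > 0"
    then obtain x' where x': "x' \<in> P" "d x' z < ennreal e" using H by blast
    show "d p z < ennreal e" using gate_dist_le[OF x'(1) zQ g] x'(2) by (rule le_less_trans)
  qed
  then have "p = z" using ext_metric_eq_0_iff[OF ext_metric_Q gateD(2)[OF g] zQ] by simp
  then show False using gateD(1)[OF g] zP by simp
qed

lemma P_convex:
  assumes x: "x \<in> P" and y: "y \<in> P" and q: "q \<in> D" and b: "metric_between d x q y"
  shows "q \<in> P"
proof (rule ccontr)
  assume qP: "q \<notin> P"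
  then have qQ: "q \<in> Q" using q D_eq by blast
  have f: "d x q < \<infinity>" "d q y < \<infinity>" "d x y < \<infinity>" using metric_between_finite[OF b] by auto
  obtain g where g: "gate d (P \<inter> Q) q g" using gate_exists[OF x qQ f(1)] by blast
  have gP: "g \<in> P" using gateD[OF g] by blast
  have e1: "d x q = d x g + d g q" using dist_through_gate[OF x qQ g] .
  have "d y q = d q y" using sym_D y q P_subset_D by blast
  moreover have "d y g = d g y" using sym_D gP y P_subset_D by blast
  ultimately have e2: "d q y = d g q + d g y" using dist_through_gate[OF y qQ g]
    by (simp add: add.commute)
  have "d x g + d g q + (d g q + d g y) = d x y" using b e1 e2 by (simp add: metric_between_def)
  moreover have "d x y \<le> d x g + d g y" using ext_metric_triangle[OF ext_metric_P x gP y] .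
  ultimately have "d g q = 0" using ennreal_detour_0 f(3) by blast
  then have "g = q" using ext_metric_eq_0_iff[OF ext_metric_Q gateD(2)[OF g] qQ] by simp
  then show False using gP qP by simp
qed

lemma triangle_PPQ:
  assumes x: "x \<in> P" and y: "y \<in> P" and z: "z \<in> Q"
  shows "d x z \<le> d x y + d y z"
proof (cases "d y z < \<infinity>")
  case False then show ?thesis by (simp add: less_top[symmetric])
next
  case True
  obtain p where g: "gate d (P \<inter> Q) z p" using gate_exists[OF y z True] by blast
  have pP: "p \<in> P" using gateD[OF g] by blast
  have "d x z = d x p + d p z" using dist_through_gate[OF x z g] .
  also have "\<dots> \<le> d x y + d y p + d p z" using ext_metric_triangle[OF ext_metric_P x y pP]
    by (rule add_right_mono)
  also have "\<dots> = d x y + d y z" using dist_through_gate[OF y z g] by (simp add: add.assoc)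
  finally show ?thesis .
qed

lemma triangle_PQP:
  assumes x: "x \<in> P" and y: "y \<in> Q" and z: "z \<in> P"
  shows "d x z \<le> d x y + d y z"
proof (cases "d x y < \<infinity>")
  case False then show ?thesis by (simp add: less_top[symmetric])
next
  case True
  obtain p where g: "gate d (P \<inter> Q) y p" using gate_exists[OF x y True] by blast
  have pP: "p \<in> P" using gateD[OF g] by blast
  have "d x z \<le> d x p + d p z" using ext_metric_triangle[OF ext_metric_P x pP z] .
  also have "d x p \<le> d x y" using dist_through_gate[OF x y g] by (simp add: add_increasing2)
  also have "d p z \<le> d y z"
  proof -
    have "d p z = d z p" using sym_D pP z P_subset_D by blast
    also have "\<dots> \<le> d z y" using dist_through_gate[OF z y g] by (simp add: add_increasing2)
    also have "\<dots> = d y z" using sym_D y z P_subset_D Q_subset_D by blast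
    finally show ?thesis .
  qed
  finally show ?thesis by (simp add: add_mono)
qed

lemma triangle_QPP:
  assumes x: "x \<in> Q" and y: "y \<in> P" and z: "z \<in> P"
  shows "d x z \<le> d x y + d y z"
proof -
  have "d x z = d z x" using sym_D x z P_subset_D Q_subset_D by blast
  also have "\<dots> \<le> d z y + d y x" using triangle_PPQ[OF z y x] .
  also have "\<dots> = d x y + d y z" using sym_D x y z P_subset_D Q_subset_D
    by (simp add: add.commute subset_iff)
  finally show ?thesis .
qed

lemma triangle_two_in_P:
  assumes "x \<in> D" "y \<in> D" "z \<in> D" and "x \<in> P \<and> y \<in> P \<or> x \<in> P \<and> z \<in> P \<or> y \<in> P \<and> z \<in> P"
  shows "d x z \<le> d x y + d y z"
  using assms D_eq ext_metric_triangle[OF ext_metric_P] triangle_PPQ triangle_PQP triangle_QPP by blast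

lemma dist_eq_0_PQ:
  assumes x: "x \<in> P" and y: "y \<in> Q" and z: "d x y = 0"
  shows "x = y"
proof -
  obtain p where g: "gate d (P \<inter> Q) y p" using gate_exists[OF x y] z by auto
  have "d p y = 0" using gate_dist_le[OF x y g] z by simp
  then have "p = y" using ext_metric_eq_0_iff[OF ext_metric_Q gateD(2)[OF g] y] by simp
  then have yP: "y \<in> P" using gateD(1)[OF g] by simp
  then show ?thesis using ext_metric_eq_0_iff[OF ext_metric_P x yP] z by simp
qed

lemma ext_metric_D: "ext_metric D d"
  unfolding ext_metric_def
proof (intro conjI ballI)
  interpret S: forest_gluing D d Q P by (rule swapped)
  fix x y assume x: "x \<in> D" and y: "y \<in> D"
  show "d x y = d y x" using sym_D[OF x y] .
  show "d x y = 0 \<longleftrightarrow> x = y"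
  proof
    assume z: "d x y = 0"
    have "x \<in> P \<and> y \<in> P \<or> x \<in> Q \<and> y \<in> Q \<or> x \<in> P \<and> y \<in> Q \<or> x \<in> Q \<and> y \<in> P" using x y D_eq by blast
    moreover have "d y x = 0" using z sym_D[OF x y] by simp
    ultimately show "x = y"
      using ext_metric_eq_0_iff[OF ext_metric_P] ext_metric_eq_0_iff[OF ext_metric_Q] dist_eq_0_PQ
        S.dist_eq_0_PQ z by metis
  next
    assume "x = y"
    then show "d x y = 0"
      using x D_eq ext_metric_zero[OF ext_metric_P] ext_metric_zero[OF ext_metric_Q] by blast
  qed
  fix z assume z: "z \<in> D"
  have "x \<in> P \<and> y \<in> P \<or> x \<in> P \<and> z \<in> P \<or> y \<in> P \<and> z \<in> P \<or>
      x \<in> Q \<and> y \<in> Q \<or> x \<in> Q \<and> z \<in> Q \<or> y \<in> Q \<and> z \<in> Q"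
    using x y z D_eq by blast
  then show "d x z \<le> d x y + d y z"
    using triangle_two_in_P[OF x y z] S.triangle_two_in_P[OF x y z] by blast
qed

lemma geodesic_PQ:
  assumes x: "x \<in> P" and y: "y \<in> Q" and f: "d x y < \<infinity>"
  obtains \<psi> where "geodesic D d x y \<psi>"
proof -
  obtain p where g: "gate d (P \<inter> Q) y p" using gate_exists[OF x y f] .
  have pP: "p \<in> P" and pQ: "p \<in> Q" using gateD[OF g] by auto
  have fp: "d x p < \<infinity>" "d p y < \<infinity>" using gate_dist_finite[OF x y g f] by auto
  obtain \<phi>1 where g1: "geodesic P d x p \<phi>1" using R_forest_geodesic[OF R_forest_P x pP fp(1)] .
  obtain \<phi>2 where g2: "geodesic Q d p y \<phi>2" using R_forest_geodesic[OF R_forest_Q pQ y fp(2)] .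
  have "metric_between d x p y"
    using dist_through_gate[OF x y g] f by (simp add: metric_between_def)
  moreover have "geodesic D d x p \<phi>1" "geodesic D d p y \<phi>2"
    using geodesic_mono[OF g1 P_subset_D] geodesic_mono[OF g2 Q_subset_D] .
  ultimately show ?thesis using geodesic_join[OF ext_metric_D] that by blast
qed

lemma geodesic_D:
  assumes x: "x \<in> D" and y: "y \<in> D" and f: "d x y < \<infinity>"
  shows "\<exists>\<phi>. geodesic D d x y \<phi>"
proof -
  interpret S: forest_gluing D d Q P by (rule swapped)
  consider "x \<in> P" "y \<in> P" | "x \<in> Q" "y \<in> Q" | "x \<in> P" "y \<in> Q" | "x \<in> Q" "y \<in> P"
    using x y D_eq by blast
  then show ?thesis
  proof cases
    case 1
    then obtain \<phi> where "geodesic P d x y \<phi>" using R_forest_geodesic[OF R_forest_P _ _ f] by blast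
    then show ?thesis using geodesic_mono[OF _ P_subset_D] by blast
  next
    case 2
    then obtain \<phi> where "geodesic Q d x y \<phi>" using R_forest_geodesic[OF R_forest_Q _ _ f] by blast
    then show ?thesis using geodesic_mono[OF _ Q_subset_D] by blast
  next
    case 3 then show ?thesis using geodesic_PQ[OF _ _ f] by metis
  next
    case 4 then show ?thesis using S.geodesic_PQ[OF _ _ f] by metis
  qed
qed

lemma last_exit_from_P:
  fixes \<gamma> :: "real \<Rightarrow> 'a"
  assumes pc: "ext_continuous_on {0..1} d \<gamma>" and inD: "\<And>u. u \<in> {0..1} \<Longrightarrow> \<gamma> u \<in> D" and g0: "\<gamma> 0 \<in> P"
    and t: "t \<in> {0..1}" and gt: "\<gamma> t \<notin> P"
  shows "\<exists>a. 0 \<le> a \<and> a < t \<and> \<gamma> a \<in> P \<and> \<gamma> a \<in> Q \<and> (\<forall>u. a < u \<and> u \<le> t \<longrightarrow> \<gamma> u \<in> Q \<and> \<gamma> u \<notin> P)"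
proof -
  interpret S: forest_gluing D d Q P by (rule swapped)
  define SS where "SS = {u\<in>{0..t}. \<gamma> u \<in> P}"
  have t0: "0 \<le> t" "t \<le> 1" using t by auto
  have ne: "SS \<noteq> {}" and zS: "0 \<in> SS" using g0 t0 by (auto simp: SS_def)
  have bdd: "bdd_above SS" unfolding bdd_above_def SS_def by auto
  define a where "a = Sup SS"
  have upper: "\<And>u. u \<in> SS \<Longrightarrow> u \<le> a" unfolding a_def using bdd by (simp add: cSup_upper)
  have a0: "0 \<le> a" using upper[OF zS] .
  have at: "a \<le> t" unfolding a_def using ne by (rule cSup_least) (simp add: SS_def)
  have aI: "a \<in> {0..1}" using a0 at t0 by simp
  have aP: "\<gamma> a \<in> P"
  proof (rule P_closed_in_D[OF inD[OF aI]], intro allI impI)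
    fix e :: real assume e: "e > 0"
    obtain \<delta> where \<delta>: "\<delta> > 0" "\<forall>s\<in>{0..1}. \<bar>s - a\<bar> < \<delta> \<longrightarrow> d (\<gamma> s) (\<gamma> a) < ennreal e"
      using pc aI e unfolding ext_continuous_on_def by blast
    have "a - \<delta> < Sup SS" using \<delta>(1) by (simp add: a_def)
    then obtain u where u: "u \<in> SS" "a - \<delta> < u" using less_cSup_iff[OF ne bdd] by blast
    have "u \<le> a" using upper[OF u(1)] .
    then have "\<bar>u - a\<bar> < \<delta>" "u \<in> {0..1}" using u t0 by (auto simp: SS_def)
    then have "d (\<gamma> u) (\<gamma> a) < ennreal e" using \<delta>(2) by blast
    moreover have "\<gamma> u \<in> P" using u(1) by (simp add: SS_def)
    ultimately show "\<exists>x\<in>P. d x (\<gamma> a) < ennreal e" by blast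
  qed
  have alt: "a < t" using at aP gt by (cases "a = t") auto
  have after: "\<gamma> u \<in> Q \<and> \<gamma> u \<notin> P" if "a < u" "u \<le> t" for u
  proof -
    have "\<gamma> u \<notin> P"
    proof
      assume "\<gamma> u \<in> P"
      then have "u \<in> SS" using that a0 by (simp add: SS_def)
      then show False using upper that(1) by fastforce
    qed
    moreover have "u \<in> {0..1}" using that a0 t0 by simp
    ultimately show ?thesis using inD D_eq by blast
  qed
  have aQ: "\<gamma> a \<in> Q"
  proof (rule S.P_closed_in_D[OF inD[OF aI]], intro allI impI)
    fix e :: real assume e: "e > 0"
    obtain \<delta> where \<delta>: "\<delta> > 0" "\<forall>s\<in>{0..1}. \<bar>s - a\<bar> < \<delta> \<longrightarrow> d (\<gamma> s) (\<gamma> a) < ennreal e"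
      using pc aI e unfolding ext_continuous_on_def by blast
    define u where "u = min t (a + \<delta> / 2)"
    have u: "a < u" "u \<le> t" "\<bar>u - a\<bar> < \<delta>" "u \<in> {0..1}" using alt \<delta>(1) a0 t0 by (auto simp: u_def)
    then have "d (\<gamma> u) (\<gamma> a) < ennreal e" using \<delta>(2) by blast
    moreover have "\<gamma> u \<in> Q" using after[OF u(1,2)] by blast
    ultimately show "\<exists>x\<in>Q. d x (\<gamma> a) < ennreal e" by blast
  qed
  show ?thesis using a0 alt aP aQ after by blast
qed

lemma excursion_from_P:
  fixes \<gamma> :: "real \<Rightarrow> 'a"
  assumes pc: "ext_continuous_on {0..1} d \<gamma>" and inD: "\<And>u. u \<in> {0..1} \<Longrightarrow> \<gamma> u \<in> D"
    and ends: "\<gamma> 0 \<in> P" "\<gamma> 1 \<in> P" and t: "t \<in> {0..1}" and gt: "\<gamma> t \<notin> P"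
  obtains a b where "0 \<le> a" "a < t" "t < b" "b \<le> 1" "\<gamma> a \<in> P" "\<gamma> a \<in> Q" "\<gamma> b \<in> P"
    "\<gamma> ` {a..b} \<subseteq> Q"
proof -
  obtain a where a: "0 \<le> a" "a < t" "\<gamma> a \<in> P" "\<gamma> a \<in> Q" "\<forall>u. a < u \<and> u \<le> t \<longrightarrow> \<gamma> u \<in> Q"
    using last_exit_from_P[OF pc inD ends(1) t gt] by blast
  define \<gamma>' where "\<gamma>' = (\<lambda>s. \<gamma> (1 - s))"
  have pc': "ext_continuous_on {0..1} d \<gamma>'" using ext_continuous_on_reverse[OF pc]
    by (simp add: \<gamma>'_def)
  have inD': "\<And>u. u \<in> {0..1} \<Longrightarrow> \<gamma>' u \<in> D" using inD by (simp add: \<gamma>'_def)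
  have "\<gamma>' 0 \<in> P" "1 - t \<in> {0..1}" "\<gamma>' (1 - t) \<notin> P" using ends(2) t gt by (auto simp: \<gamma>'_def)
  then obtain a' where a': "0 \<le> a'" "a' < 1 - t" "\<gamma>' a' \<in> P" "\<gamma>' a' \<in> Q"
    "\<forall>u. a' < u \<and> u \<le> 1 - t \<longrightarrow> \<gamma>' u \<in> Q"
    using last_exit_from_P[OF pc' inD'] by blast
  define b where "b = 1 - a'"
  have b: "t < b" "b \<le> 1" "\<gamma> b \<in> P" "\<gamma> b \<in> Q" using a' by (auto simp: b_def \<gamma>'_def)
  have "\<gamma> v \<in> Q" if v: "v \<in> {a..b}" for v
  proof -
    consider "v = a" | "a < v" "v \<le> t" | "t \<le> v" "v < b" | "v = b" using v by fastforce
    then show ?thesis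
    proof cases
      case 3
      then have "a' < 1 - v" "1 - v \<le> 1 - t" by (auto simp: b_def)
      then have "\<gamma>' (1 - v) \<in> Q" using a'(5) by blast
      then show ?thesis by (simp add: \<gamma>'_def)
    qed (use a b in auto)
  qed
  then show ?thesis using that a(1-4) b(1-3) by blast
qed

text \<open>If an arc between points of P left P, the excursion around the exit would be an arc of Q with
  both ends in the common part, i.e. a segment of Q, which lies in the common part by convexity.\<close>

lemma arc_PP_subset_P:
  assumes x: "x \<in> P" and y: "y \<in> P" and A: "is_arc D d x y A"
  shows "A \<subseteq> P"
proof
  fix q assume "q \<in> A"
  obtain \<gamma> :: "real \<Rightarrow> 'a" where g: "\<gamma> ` {0..1} = A" "A \<subseteq> D" "inj_on \<gamma> {0..1}" "\<gamma> 0 = x" "\<gamma> 1 = y"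
    "ext_continuous_on {0..1} d \<gamma>"
    using is_arcE[OF A] by metis
  then obtain t where t: "t \<in> {0..1}" "q = \<gamma> t" using \<open>q \<in> A\<close> by blast
  show "q \<in> P"
  proof (rule ccontr)
    assume qP: "q \<notin> P"
    have inD: "\<And>u. u \<in> {0..1} \<Longrightarrow> \<gamma> u \<in> D" using g(1,2) by blast
    obtain a b where ab: "0 \<le> a" "a < t" "t < b" "b \<le> 1" "\<gamma> a \<in> P" "\<gamma> a \<in> Q" "\<gamma> b \<in> P"
      and sub: "\<gamma> ` {a..b} \<subseteq> Q"
    proof (rule excursion_from_P[OF g(6) inD _ _ t(1)])
      show "\<gamma> 0 \<in> P" "\<gamma> 1 \<in> P" "\<gamma> t \<notin> P" using g(4,5) x y qP t(2) by simp_all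
    qed
    have bQ: "\<gamma> b \<in> Q" using sub ab(1-3) by auto
    have "\<gamma> ` {0..1} \<subseteq> D" using g(1,2) by simp
    have "a < b" using ab(2,3) by simp
    have "is_arc D d (\<gamma> a) (\<gamma> b) (\<gamma> ` {a..b})"
      by (rule is_arc_subpath[OF g(6) g(3) \<open>\<gamma> ` {0..1} \<subseteq> D\<close> ab(1) \<open>a < b\<close> ab(4)])
    then have arcQ: "is_arc Q d (\<gamma> a) (\<gamma> b) (\<gamma> ` {a..b})" by (rule is_arc_restrict[OF _ sub])
    have "a \<in> {0..1}" "b \<in> {0..1}" using ab(1-4) by auto
    then have "\<gamma> a \<noteq> \<gamma> b" using inj_onD[OF g(3)] \<open>a < b\<close> by (metis less_irrefl)
    then have seg: "\<gamma> ` {a..b} = {w\<in>Q. metric_between d (\<gamma> a) w (\<gamma> b)}"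
      by (rule R_forest_arc_eq_segment[OF R_forest_Q _ arcQ])
    have "q \<in> \<gamma> ` {a..b}" using t ab(2,3) by auto
    then have "q \<in> Q" "metric_between d (\<gamma> a) q (\<gamma> b)" unfolding seg by simp_all
    then have "q \<in> P \<inter> Q" using ext_convexD[OF convex_Q, of "\<gamma> a" "\<gamma> b" q] ab(5-7) bQ by simp
    then show False using qP by blast
  qed
qed

lemma arc_eq_segment_PP:
  assumes x: "x \<in> P" and y: "y \<in> P" and xy: "x \<noteq> y" and A: "is_arc D d x y A"
  shows "A = {q\<in>D. metric_between d x q y}"
proof -
  have "A = {q\<in>P. metric_between d x q y}"
    using R_forest_arc_eq_segment[OF R_forest_P xy is_arc_restrict[OF A arc_PP_subset_P[OF x y A]]]
      .
  also have "\<dots> = {q\<in>D. metric_between d x q y}" using P_convex[OF x y] P_subset_D by blast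
  finally show ?thesis .
qed

text \<open>With g the gate of q, both q and c lie on the segment of Q from g to y, and q cannot come
  before c, since then it would lie in the convex common part.\<close>

lemma between_beyond_gate:
  assumes x: "x \<in> P" and y: "y \<in> Q" and gc: "gate d (P \<inter> Q) y c" and q: "q \<in> Q" "q \<notin> P"
    and b: "metric_between d x q y"
  shows "metric_between d c q y"
proof -
  have cP: "c \<in> P" and cQ: "c \<in> Q" using gateD[OF gc] by auto
  have fxq: "d x q < \<infinity>" and fqy: "d q y < \<infinity>" using metric_between_finite[OF b] by auto
  have bq: "d x q + d q y = d x y" using b by (simp add: metric_between_def)
  have dxy: "d x y = d x c + d c y" using dist_through_gate[OF x y gc] .
  obtain g where gq: "gate d (P \<inter> Q) q g" using gate_exists[OF x q(1) fxq] .
  have gP: "g \<in> P" and gQ: "g \<in> Q" using gateD[OF gq] by auto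
  have dxq: "d x q = d x g + d g q" using dist_through_gate[OF x q(1) gq] .
  have dgy: "d g y = d g c + d c y" using gateD(3)[OF gc] gP gQ by blast
  have fxg: "d x g < \<infinity>" and fgq: "d g q < \<infinity>" using fxq dxq by auto
  have "d x g + (d g q + d q y) = d x y" using bq dxq by (simp add: add.assoc)
  also have "\<dots> \<le> d x g + d g c + d c y"
    using dxy ext_metric_triangle[OF ext_metric_P x gP cP] by (simp add: add_right_mono)
  also have "\<dots> = d x g + d g y" using dgy by (simp add: add.assoc)
  finally have "d g q + d q y \<le> d g y" using fxg by (auto simp: less_top)
  then have dgqy: "d g q + d q y = d g y"
    using ext_metric_triangle[OF ext_metric_Q gQ q(1) y] by (simp add: antisym)
  have fgy: "d g y < \<infinity>" using dgqy fgq fqy by (metis ennreal_add_less_top infinity_ennreal_def)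
  have gqy: "metric_between d g q y" using dgqy fgy by (simp add: metric_between_def)
  have gcy: "metric_between d g c y" using dgy fgy by (simp add: metric_between_def)
  show ?thesis
  proof (cases "d g q \<le> d g c")
    case True
    have "metric_between d g q c" using segment_order(1)[OF R_forest_Q gQ y cQ q(1) gcy gqy True] .
    then have "q \<in> P \<inter> Q" using ext_convexD[OF convex_Q] gP gQ cP cQ q(1) by blast
    then show ?thesis using q(2) by blast
  next
    case False
    then show ?thesis using segment_order(2)[OF R_forest_Q gQ y cQ q(1) gcy gqy] by simp
  qed
qed

lemma segment_through_gate:
  assumes x: "x \<in> P" and y: "y \<in> Q" and gc: "gate d (P \<inter> Q) y c" and f: "d x y < \<infinity>"
  shows "{q\<in>D. metric_between d x q y} =
    {q\<in>D. metric_between d x q c} \<union> {q\<in>Q. metric_between d c q y}"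
proof -
  have cP: "c \<in> P" and cQ: "c \<in> Q" using gateD[OF gc] by auto
  have dxy: "d x y = d x c + d c y" using dist_through_gate[OF x y gc] .
  then have bc: "metric_between d x c y" using f by (simp add: metric_between_def)
  have fcy: "d c y < \<infinity>" using metric_between_finite(2)[OF bc] .
  have xD: "x \<in> D" and yD: "y \<in> D" and cD: "c \<in> D" using x y cP P_subset_D Q_subset_D by auto
  show ?thesis
  proof (intro equalityI subsetI)
    fix q assume "q \<in> {q\<in>D. metric_between d x q y}"
    then have qD: "q \<in> D" and b: "metric_between d x q y" by auto
    show "q \<in> {q\<in>D. metric_between d x q c} \<union> {q\<in>Q. metric_between d c q y}"
    proof (cases "q \<in> P")
      case True
      have "d c y + (d x q + d q c) = d c y + d x c"
        using b dist_through_gate[OF True y gc] dxy by (simp add: metric_between_def add_ac)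
      then have "d x q + d q c = d x c" using fcy by (auto simp: less_top)
      then show ?thesis using qD metric_between_finite(1)[OF bc] by (simp add: metric_between_def)
    next
      case False
      then show ?thesis using between_beyond_gate[OF x y gc _ False b] qD D_eq by blast
    qed
  next
    fix q assume "q \<in> {q\<in>D. metric_between d x q c} \<union> {q\<in>Q. metric_between d c q y}"
    then show "q \<in> {q\<in>D. metric_between d x q y}"
      using metric_between_extend_right[OF ext_metric_D xD _ cD yD bc]
        metric_between_extend_left[OF ext_metric_D xD _ cD yD bc] Q_subset_D by blast
  qed
qed

lemma arc_PQ_decompose:
  assumes x: "x \<in> P" "x \<notin> Q" and y: "y \<in> Q" "y \<notin> P" and A: "is_arc D d x y A"
  obtains c where "c \<in> P" "c \<in> Q" "c \<in> A"
    "A = {q\<in>D. metric_between d x q c} \<union> {q\<in>Q. metric_between d c q y}"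
    "\<And>q. q \<in> P \<Longrightarrow> q \<in> Q \<Longrightarrow> metric_between d c q y \<Longrightarrow> q = c"
proof -
  obtain \<gamma> :: "real \<Rightarrow> 'a" where g: "\<gamma> ` {0..1} = A" "A \<subseteq> D" "inj_on \<gamma> {0..1}" "\<gamma> 0 = x"
    "\<gamma> 1 = y" "ext_continuous_on {0..1} d \<gamma>"
    using is_arcE[OF A] by metis
  have inD: "\<And>u. u \<in> {0..1} \<Longrightarrow> \<gamma> u \<in> D" and gD: "\<gamma> ` {0..1} \<subseteq> D" using g(1,2) by auto
  have "\<gamma> 0 \<in> P" "(1::real) \<in> {0..1}" "\<gamma> 1 \<notin> P" using g(4,5) x(1) y(2) by simp_all
  then obtain a where a: "0 \<le> a" "a < 1" "\<gamma> a \<in> P" "\<gamma> a \<in> Q"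
    and after: "\<forall>u. a < u \<and> u \<le> 1 \<longrightarrow> \<gamma> u \<in> Q \<and> \<gamma> u \<notin> P"
    using last_exit_from_P[OF g(6) inD] by blast
  define c where "c = \<gamma> a"
  have cP: "c \<in> P" and cQ: "c \<in> Q" and cA: "c \<in> A" using a g(1) by (auto simp: c_def)
  have a_pos: "0 < a"
  proof (rule ccontr)
    assume "\<not> 0 < a"
    then have "a = 0" using a(1) by simp
    then show False using cQ x(2) g(4) by (simp add: c_def)
  qed
  have "is_arc D d x c (\<gamma> ` {0..a})"
    using is_arc_subpath[OF g(6) g(3) gD order.refl a_pos] a(2) g(4) by (simp add: c_def)
  moreover have "x \<noteq> c" using x(2) cQ by blast
  ultimately have part1: "\<gamma> ` {0..a} = {q\<in>D. metric_between d x q c}"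
    using arc_eq_segment_PP[OF x(1) cP] by blast
  have sub2: "\<gamma> ` {a..1} \<subseteq> Q"
  proof
    fix w assume "w \<in> \<gamma> ` {a..1}"
    then obtain v where v: "v \<in> {a..1}" "w = \<gamma> v" by blast
    show "w \<in> Q"
    proof (cases "v = a")
      case True then show ?thesis using a(4) v(2) by simp
    next
      case False then show ?thesis using after v by auto
    qed
  qed
  have "is_arc D d c y (\<gamma> ` {a..1})"
    using is_arc_subpath[OF g(6) g(3) gD a(1) a(2) order.refl] g(5) by (simp add: c_def)
  then have "is_arc Q d c y (\<gamma> ` {a..1})" by (rule is_arc_restrict[OF _ sub2])
  moreover have "c \<noteq> y" using y(2) cP by blast
  ultimately have part2: "\<gamma> ` {a..1} = {q\<in>Q. metric_between d c q y}"
    using R_forest_arc_eq_segment[OF R_forest_Q] by blast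
  have "{0..1} = {0..a} \<union> {a..(1::real)}" using a(1,2) by auto
  then have "A = \<gamma> ` {0..a} \<union> \<gamma> ` {a..1}" using g(1) image_Un by metis
  then have Aeq: "A = {q\<in>D. metric_between d x q c} \<union> {q\<in>Q. metric_between d c q y}"
    using part1 part2 by simp
  have only_c: "q = c" if q: "q \<in> P" "q \<in> Q" "metric_between d c q y" for q
  proof -
    obtain u where u: "u \<in> {a..1}" "q = \<gamma> u" using part2 q(2,3) by blast
    have "\<not> a < u" using after u q(1) by auto
    then show ?thesis using u by (simp add: c_def)
  qed
  show ?thesis by (rule that[OF cP cQ cA Aeq only_c])
qed

lemma arc_eq_segment_PQ:
  assumes x: "x \<in> P" "x \<notin> Q" and y: "y \<in> Q" "y \<notin> P" and A: "is_arc D d x y A"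
  shows "A = {q\<in>D. metric_between d x q y}"
proof -
  obtain c where cP: "c \<in> P" and cQ: "c \<in> Q" and cA: "c \<in> A"
    and Aeq: "A = {q\<in>D. metric_between d x q c} \<union> {q\<in>Q. metric_between d c q y}"
    and only_c: "\<And>q. q \<in> P \<Longrightarrow> q \<in> Q \<Longrightarrow> metric_between d c q y \<Longrightarrow> q = c"
    using arc_PQ_decompose[OF x y A] by blast
  have "d y c < \<infinity>" using is_arc_finite_dist[OF ext_metric_D is_arc_reverse[OF A] cA] .
  moreover have "d c y = d y c" using sym_D cP y(1) P_subset_D Q_subset_D by blast
  ultimately have fcy: "d c y < \<infinity>" by simp
  obtain p where gp: "gate d (P \<inter> Q) y p" using gate_exists[OF cP y(1) fcy] .
  have "metric_between d c p y" using gateD(3)[OF gp] cP cQ fcy by (simp add: metric_between_def)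
  then have "p = c" using only_c gateD(1,2)[OF gp] by blast
  then have gc: "gate d (P \<inter> Q) y c" using gp by simp
  have "d x y < \<infinity>" using is_arc_finite_dist[OF ext_metric_D A is_arc_endpoints(2)[OF A]] .
  then show ?thesis using Aeq segment_through_gate[OF x(1) y(1) gc] by simp
qed

lemma arc_eq_segment_D:
  assumes xy: "x \<noteq> y" and A: "is_arc D d x y A"
  shows "A = {q\<in>D. metric_between d x q y}"
proof -
  interpret S: forest_gluing D d Q P by (rule swapped)
  have x: "x \<in> D" and y: "y \<in> D" using is_arc_endpoints[OF A] by blast+
  consider "x \<in> P" "y \<in> P" | "x \<in> Q" "y \<in> Q" | "x \<in> P" "x \<notin> Q" "y \<in> Q" "y \<notin> P"
    | "x \<in> Q" "x \<notin> P" "y \<in> P" "y \<notin> Q"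
    using x y D_eq by blast
  then show ?thesis
  proof cases
    case 1 then show ?thesis using arc_eq_segment_PP[OF _ _ xy A] by blast
  next
    case 2 then show ?thesis using S.arc_eq_segment_PP[OF _ _ xy A] by blast
  next
    case 3 then show ?thesis using arc_eq_segment_PQ[OF _ _ _ _ A] by blast
  next
    case 4
    have "A = {q\<in>D. metric_between d y q x}"
      using arc_eq_segment_PQ[OF 4(3,4,1,2) is_arc_reverse[OF A]] .
    also have "\<dots> = {q\<in>D. metric_between d x q y}"
      using metric_between_sym[OF ext_metric_D y _ x] metric_between_sym[OF ext_metric_D x _ y]
        by blast
    finally show ?thesis .
  qed
qed

lemma ext_complete_D: "ext_complete D d"
  unfolding ext_complete_def
proof (intro allI impI)
  fix s assume "(\<forall>n. s n \<in> D) \<and> ext_cauchy d s"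
  then have sD: "\<And>n. s n \<in> D" and cau: "ext_cauchy d s" by auto
  have "(\<forall>N. \<exists>n\<ge>N. s n \<in> P) \<or> (\<forall>N. \<exists>n\<ge>N. s n \<in> Q)"
  proof (rule ccontr)
    assume "\<not> ?thesis"
    then obtain N1 N2 where "\<forall>n\<ge>N1. s n \<notin> P" "\<forall>n\<ge>N2. s n \<notin> Q" by auto
    then show False using sD[of "max N1 N2"] D_eq by auto
  qed
  moreover note ext_cauchy_frequently_in_complete_converges[OF ext_metric_D _ _ sD cau]
  ultimately show "ext_converges_in D d s"
    using P_subset_D Q_subset_D R_forest_ext_complete[OF R_forest_P] R_forest_ext_complete[OF R_forest_Q]
    by blast
qed

lemma R_forest_D: "R_forest D d"
  using R_forestI[OF ext_metric_D ext_complete_D geodesic_D arc_eq_segment_D] .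

end

subsection \<open>Amalgamation\<close>

lemma INF_eq_minimum:
  fixes F :: "'s \<Rightarrow> 'b::complete_lattice"
  assumes "s0 \<in> S" "\<And>s. s \<in> S \<Longrightarrow> F s0 \<le> F s"
  shows "(INF s\<in>S. F s) = F s0"
  using assms by (intro antisym INF_lower INF_greatest)

lemma INF_dist_through_subset:
  assumes em: "ext_metric C d" and S: "S \<subseteq> C" and c: "c \<in> S" and c': "c' \<in> C"
  shows "(INF s\<in>S. d c s + d s c') = d c c'"
proof -
  have "(INF s\<in>S. d c s + d s c') = d c c + d c c'"
  proof (rule INF_eq_minimum[OF c])
    fix s assume "s \<in> S"
    then have "d c c' \<le> d c s + d s c'" using ext_metric_triangle[OF em _ _ c'] c S by blast
    then show "d c c + d c c' \<le> d c s + d s c'" using ext_metric_zero[OF em] c S by auto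
  qed
  then show ?thesis using ext_metric_zero[OF em] c S by auto
qed

locale forest_amalgamation =
  fixes A :: "'a set" and dA and B :: "'b set" and dB and C :: "'c set" and dC and f g
  assumes RA: "R_forest A dA" and RB: "R_forest B dB" and RC: "R_forest C dC"
    and ef: "iso_emb A dA B dB f" and eg: "iso_emb A dA C dC g"
begin

definition to_B :: "'c \<Rightarrow> 'b" where
  "to_B c = f (inv_into A g c)"

text \<open>C is glued onto B by identifying g a with f a: the points of g ` A are represented in the
  amalgam by their copies in B.\<close>

definition emb_C :: "'c \<Rightarrow> 'b + 'c" where
  "emb_C c = (if c \<in> g ` A then Inl (to_B c) else Inr c)"

definition amalg_dist :: "'b + 'c \<Rightarrow> 'b + 'c \<Rightarrow> ennreal" where
  "amalg_dist u v = (case (u, v) of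
      (Inl b, Inl b') \<Rightarrow> dB b b'
    | (Inr c, Inr c') \<Rightarrow> dC c c'
    | (Inl b, Inr c) \<Rightarrow> (INF s\<in>g ` A. dB b (to_B s) + dC s c)
    | (Inr c, Inl b) \<Rightarrow> (INF s\<in>g ` A. dB b (to_B s) + dC s c))"

lemma amalg_dist_simps [simp]:
  "amalg_dist (Inl b) (Inl b') = dB b b'"
  "amalg_dist (Inr c) (Inr c') = dC c c'"
  "amalg_dist (Inl b) (Inr c) = (INF s\<in>g ` A. dB b (to_B s) + dC s c)"
  "amalg_dist (Inr c) (Inl b) = (INF s\<in>g ` A. dB b (to_B s) + dC s c)"
  by (simp_all add: amalg_dist_def)

lemma ext_metric_A: "ext_metric A dA" and ext_metric_B: "ext_metric B dB" and ext_metric_C: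
  "ext_metric C dC"
  using RA RB RC by (simp_all add: R_forest_ext_metric)

lemma gA_subset: "g ` A \<subseteq> C"
  using iso_embD(1)[OF eg] by blast

lemma to_B_g: "a \<in> A \<Longrightarrow> to_B (g a) = f a"
  using inv_into_f_f[OF iso_emb_inj[OF eg ext_metric_A]] by (simp add: to_B_def)

lemma to_B_in_B: "c \<in> g ` A \<Longrightarrow> to_B c \<in> B"
  using to_B_g iso_embD(1)[OF ef] by auto

lemma to_B_dist: "c \<in> g ` A \<Longrightarrow> c' \<in> g ` A \<Longrightarrow> dB (to_B c) (to_B c') = dC c c'"
  using to_B_g iso_embD(2)[OF ef] iso_embD(2)[OF eg] by auto

lemma amalg_dist_Inl_emb_C:
  assumes b: "b \<in> B" and c: "c \<in> C"
  shows "amalg_dist (Inl b) (emb_C c) = (INF s\<in>g ` A. dB b (to_B s) + dC s c)"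
proof (cases "c \<in> g ` A")
  case True
  have "(INF s\<in>g ` A. dB b (to_B s) + dC s c) = dB b (to_B c) + dC c c"
  proof (rule INF_eq_minimum[OF True])
    fix s assume s: "s \<in> g ` A"
    have "dB b (to_B c) \<le> dB b (to_B s) + dB (to_B s) (to_B c)"
      using ext_metric_triangle[OF ext_metric_B b to_B_in_B[OF s] to_B_in_B[OF True]] .
    then show "dB b (to_B c) + dC c c \<le> dB b (to_B s) + dC s c"
      using to_B_dist[OF s True] ext_metric_zero[OF ext_metric_C c] by simp
  qed
  then show ?thesis using True ext_metric_zero[OF ext_metric_C c] by (simp add: emb_C_def)
qed (simp add: emb_C_def)

lemma amalg_dist_emb_C:
  assumes c: "c \<in> C" and c': "c' \<in> C"
  shows "amalg_dist (emb_C c) (emb_C c') = dC c c'"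
proof (cases "c \<in> g ` A")
  case True
  then have "amalg_dist (emb_C c) (emb_C c') = (INF s\<in>g ` A. dC c s + dC s c')"
    using amalg_dist_Inl_emb_C[OF to_B_in_B[OF True] c'] to_B_dist[OF True] by (simp add: emb_C_def)
  then show ?thesis using INF_dist_through_subset[OF ext_metric_C gA_subset True c'] by simp
next
  case False
  show ?thesis
  proof (cases "c' \<in> g ` A")
    case True
    have "(INF s\<in>g ` A. dB (to_B c') (to_B s) + dC s c) = (INF s\<in>g ` A. dC c' s + dC s c)"
      using to_B_dist[OF True] by simp
    also have "\<dots> = dC c c'"
      using INF_dist_through_subset[OF ext_metric_C gA_subset True c]
        ext_metric_sym[OF ext_metric_C c c'] by simp
    finally show ?thesis using False True by (simp add: emb_C_def)
  qed (use False in \<open>simp add: emb_C_def\<close>)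
qed

lemma iso_emb_Inl: "iso_emb B dB (Inl ` B) amalg_dist Inl"
  unfolding iso_emb_def by simp

lemma iso_emb_emb_C: "iso_emb C dC (emb_C ` C) amalg_dist emb_C"
  unfolding iso_emb_def using amalg_dist_emb_C by blast

lemma emb_C_g: "a \<in> A \<Longrightarrow> emb_C (g a) = Inl (f a)"
  using to_B_g by (simp add: emb_C_def)

lemma common_part: "Inl ` B \<inter> emb_C ` C = Inl ` f ` A"
proof
  show "Inl ` f ` A \<subseteq> Inl ` B \<inter> emb_C ` C"
    using iso_embD(1)[OF ef] iso_embD(1)[OF eg] emb_C_g by (force simp flip: emb_C_g)
  show "Inl ` B \<inter> emb_C ` C \<subseteq> Inl ` f ` A"
    by (auto simp: emb_C_def to_B_g split: if_splits)
qed

lemma forest_gluing: "forest_gluing (Inl ` B \<union> emb_C ` C) amalg_dist (Inl ` B) (emb_C ` C)"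
proof -
  let ?P = "Inl ` B :: ('b + 'c) set" and ?Q = "emb_C ` C"
  have RP: "R_forest ?P amalg_dist" using R_forest_iso_emb_image[OF RB iso_emb_Inl] .
  have RQ: "R_forest ?Q amalg_dist" using R_forest_iso_emb_image[OF RC iso_emb_emb_C] .
  have eAP: "iso_emb A dA ?P amalg_dist (Inl \<circ> f)"
    using iso_embD[OF ef] unfolding iso_emb_def by auto
  have eAQ: "iso_emb A dA ?Q amalg_dist (emb_C \<circ> g)"
    using iso_embD[OF eg] amalg_dist_emb_C unfolding iso_emb_def by auto
  have imP: "(Inl \<circ> f) ` A = ?P \<inter> ?Q" using common_part by (simp add: image_comp)
  have imQ: "(emb_C \<circ> g) ` A = ?P \<inter> ?Q" using common_part emb_C_g by (force simp: image_comp)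
  have cA: "ext_complete A dA" using RA by (rule R_forest_ext_complete)
  show ?thesis
  proof
    show "R_forest ?P amalg_dist" by (rule RP)
    show "R_forest ?Q amalg_dist" by (rule RQ)
    show "ext_closed ?P amalg_dist (?P \<inter> ?Q)"
      using iso_emb_image_closed[OF ext_metric_A cA R_forest_ext_metric[OF RP] eAP] imP by simp
    show "ext_closed ?Q amalg_dist (?P \<inter> ?Q)"
      using iso_emb_image_closed[OF ext_metric_A cA R_forest_ext_metric[OF RQ] eAQ] imQ by simp
    show "ext_convex ?P amalg_dist (?P \<inter> ?Q)" using iso_emb_image_convex[OF RA RP eAP] imP by simp
    show "ext_convex ?Q amalg_dist (?P \<inter> ?Q)" using iso_emb_image_convex[OF RA RQ eAQ] imQ by simp
  next
    fix u v assume "u \<in> ?P \<union> ?Q" "v \<in> ?P \<union> ?Q"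
    then have "u \<in> ?P \<union> Inr ` C" "v \<in> ?P \<union> Inr ` C"
      using to_B_in_B by (auto simp: emb_C_def)
    then show "amalg_dist u v = amalg_dist v u"
      using ext_metric_sym[OF ext_metric_B] ext_metric_sym[OF ext_metric_C] by auto
  next
    fix x y assume "x \<in> ?P" "y \<in> ?Q"
    then obtain b c where b: "b \<in> B" "x = Inl b" and c: "c \<in> C" "y = emb_C c" by blast
    have "?P \<inter> ?Q = emb_C ` g ` A" using imQ by (simp add: image_comp)
    then have "(INF s\<in>?P \<inter> ?Q. amalg_dist x s + amalg_dist s y)
        = (INF s\<in>g ` A. amalg_dist x (emb_C s) + amalg_dist (emb_C s) y)"
      by (simp add: image_comp)
    also have "\<dots> = (INF s\<in>g ` A. dB b (to_B s) + dC s c)"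
    proof (rule INF_cong[OF refl])
      fix s assume s: "s \<in> g ` A"
      have "amalg_dist x (emb_C s) = dB b (to_B s)" using s b(2) by (simp add: emb_C_def)
      moreover have "amalg_dist (emb_C s) y = dC s c" using amalg_dist_emb_C[of s c] s gA_subset c
        by auto
      ultimately show "amalg_dist x (emb_C s) + amalg_dist (emb_C s) y = dB b (to_B s) + dC s c"
        by simp
    qed
    also have "\<dots> = amalg_dist x y" using amalg_dist_Inl_emb_C[OF b(1) c(1)] b(2) c(2) by simp
    finally show "amalg_dist x y = (INF s\<in>?P \<inter> ?Q. amalg_dist x s + amalg_dist s y)" by simp
  qed simp
qed

lemma amalgam:
  "R_forest (Inl ` B \<union> emb_C ` C) amalg_dist \<and>
   iso_emb B dB (Inl ` B \<union> emb_C ` C) amalg_dist Inl \<and>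
   iso_emb C dC (Inl ` B \<union> emb_C ` C) amalg_dist emb_C \<and>
   (\<forall>a\<in>A. Inl (f a) = emb_C (g a))"
  using forest_gluing.R_forest_D[OF forest_gluing] iso_emb_Inl iso_emb_emb_C emb_C_g
  unfolding iso_emb_def by auto

end

lemma R_forest_amalgamation:
  fixes B :: "'b set" and C :: "'c set"
  assumes "R_forest A dA" "R_forest B dB" "R_forest C dC" "iso_emb A dA B dB f" "iso_emb A dA C dC g"
  shows "\<exists>(D::('b + 'c) set) dD h k.
    R_forest D dD \<and> iso_emb B dB D dD h \<and> iso_emb C dC D dD k \<and> (\<forall>a\<in>A. h (f a) = k (g a))"
proof -
  interpret forest_amalgamation A dA B dB C dC f g using assms by unfold_locales
  show ?thesis using amalgam by blast
qed

lemma R_forest_empty: "R_forest {} d"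
  unfolding R_forest_def ext_metric_def ext_complete_def by simp

lemma iso_emb_empty: "iso_emb {} d X dX f"
  unfolding iso_emb_def by simp

theorem proposition2p7:
  shows
  "(\<forall>(X::'a set) dX (Y::'b set) dY.
      R_forest X dX \<and> R_forest Y dY \<longrightarrow>
      (\<exists>(Z::('a + 'b) set) dZ f g.
         R_forest Z dZ \<and> iso_emb X dX Z dZ f \<and> iso_emb Y dY Z dZ g)) \<and>
   (\<forall>(A::'a set) dA (B::'b set) dB (C::'c set) dC f g.
      R_forest A dA \<and> R_forest B dB \<and> R_forest C dC \<and>
      iso_emb A dA B dB f \<and> iso_emb A dA C dC g \<longrightarrow>
      (\<exists>(D::('b + 'c) set) dD h k.
         R_forest D dD \<and> iso_emb B dB D dD h \<and> iso_emb C dC D dD k \<and>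
         (\<forall>a\<in>A. h (f a) = k (g a))))"
proof (intro conjI allI impI)
  fix X :: "'a set" and dX and Y :: "'b set" and dY
  assume "R_forest X dX \<and> R_forest Y dY"
  then show "\<exists>(Z::('a + 'b) set) dZ f g. R_forest Z dZ \<and> iso_emb X dX Z dZ f \<and> iso_emb Y dY Z dZ g"
    using R_forest_amalgamation[OF R_forest_empty[of "\<lambda>_ _ :: unit. 0"] _ _ iso_emb_empty iso_emb_empty]
    by blast
qed (use R_forest_amalgamation in blast)

end
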